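(* There exist universal constants $0<c_1\le c_2<\infty$ such that for every dimension $d\ge 1$, every radius $r>0$, every $n\ge 1$ and every $\boldsymbol\lambda\in[0,1]^n$, \[ c_1\, r^2 f(\boldsymbol\lambda,1)\;\le\; L(\boldsymbol\lambda,\mathcal D^b_r)\;\le\; c_2\, r^2 f(\boldsymbol\lambda,1), \qquad f(\boldsymbol\lambda,k)=\min_{t\in[0,1]}\Big(\frac{k}{|\{i:\lambda_i\le t\}|}+t^2\Big). \]
   Context: $\boldsymbol\lambda$-contamination: given $\boldsymbol\lambda=(\lambda_1,\dots,\lambda_n)\in[0,1]^n$ and a distribution $P$ on $\mathbb R^d$, a dataset $\mathbf Z=(Z_1,\dots,Z_n)$ is generated as $Z_i=(1-B_i)X_i+B_i\tilde X_i$, where $X_1,\dots,X_n$ are i.i.d. from $P$, $B_i\sim\mathrm{Bernoulli}(\lambda_i)$ are independent (and independent of the $X_i$), and the outliers $(\tilde X_1,\dots,\tilde X_n)$ are drawn from an arbitrary joint distribution (the "adversary") that may depend on the realizations of $X_1,\dots,X_n$ and $B_1,\dots,B_n$. Write $\mathbf Z\sim_{\boldsymbol\lambda}P$. For a class $\mathcal D$ of distributions with means $\mu_P=\mathbb E_{X\sim P}[X]$, the minimax rate is $L(\boldsymbol\lambda,\mathcal D)=\inf_M\sup\mathbb E\|M(\mathbf Z)-\mu_P\|_2^2$, where the infimum is over all estimators $M$ (measurable functions of $\mathbf Z$, which may use knowledge of $\boldsymbol\lambda$) and the supremum is over $P\in\mathcal D$ and over all adversaries. $\mathcal D^b_r$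 is the set of all distributions on $\mathbb R^d$ supported on the closed Euclidean ball of radius $r$ centered at the origin. In $f$, the convention $k/0=+\infty$ is used. *)

theory Defs
  imports "HOL-Probability.Probability"
begin

text \<open>R^d is modelled as functions nat => real, extensional on {..<d},
  with the product Borel sigma-algebra.  A dataset of n points is a function
  nat => (nat => real), extensional on {..<n}.\<close>

definition Rd :: "nat \<Rightarrow> (nat \<Rightarrow> real) measure" where
  "Rd d = PiM {..<d} (\<lambda>_. borel)"

definition Samp :: "nat \<Rightarrow> nat \<Rightarrow> (nat \<Rightarrow> nat \<Rightarrow> real) measure" where
  "Samp d n = PiM {..<n} (\<lambda>_. Rd d)"

definition Bsp :: "nat \<Rightarrow> (nat \<Rightarrow> bool) measure" where
  "Bsp n = PiM {..<n} (\<lambda>_. count_space UNIV)"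

definition sqnorm :: "nat \<Rightarrow> (nat \<Rightarrow> real) \<Rightarrow> real" where
  "sqnorm d v = (\<Sum>i<d. (v i)\<^sup>2)"

definition mean :: "nat \<Rightarrow> (nat \<Rightarrow> real) measure \<Rightarrow> (nat \<Rightarrow> real)" where
  "mean d P = (\<lambda>i\<in>{..<d}. \<integral>x. x i \<partial>P)"

definition Dball :: "nat \<Rightarrow> real \<Rightarrow> (nat \<Rightarrow> real) measure set" where
  "Dball d r = {P. prob_space P \<and> sets P = sets (Rd d) \<and>
                   (AE x in P. sqnorm d x \<le> r\<^sup>2)}"

definition clean_law :: "nat \<Rightarrow> nat \<Rightarrow> (nat \<Rightarrow> real) \<Rightarrow> (nat \<Rightarrow> real) measure
     \<Rightarrow> ((nat \<Rightarrow> nat \<Rightarrow> real) \<times> (nat \<Rightarrow> bool)) measure" where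
  "clean_law d n lam P =
     pair_measure (PiM {..<n} (\<lambda>_. P)) (PiM {..<n} (\<lambda>i. measure_pmf (bernoulli_pmf (lam i))))"

text \<open>An adversary is an arbitrary joint law Q of (X, B, Xtilde) whose (X,B)-marginal
  is the clean law; the outliers Xtilde may thus depend arbitrarily on X and B.\<close>
definition adversaries :: "nat \<Rightarrow> nat \<Rightarrow> (nat \<Rightarrow> real) \<Rightarrow> (nat \<Rightarrow> real) measure
     \<Rightarrow> ((nat \<Rightarrow> nat \<Rightarrow> real) \<times> (nat \<Rightarrow> bool) \<times> (nat \<Rightarrow> nat \<Rightarrow> real)) measure set" where
  "adversaries d n lam P = {Q. prob_space Q \<and>
      sets Q = sets (pair_measure (Samp d n) (pair_measure (Bsp n) (Samp d n))) \<and>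
      distr Q (pair_measure (Samp d n) (Bsp n)) (\<lambda>(x, b, xt). (x, b)) = clean_law d n lam P}"

definition zmap :: "nat \<Rightarrow> (nat \<Rightarrow> nat \<Rightarrow> real) \<times> (nat \<Rightarrow> bool) \<times> (nat \<Rightarrow> nat \<Rightarrow> real)
     \<Rightarrow> (nat \<Rightarrow> nat \<Rightarrow> real)" where
  "zmap n = (\<lambda>(x, b, xt). (\<lambda>i\<in>{..<n}. if b i then xt i else x i))"

definition estimators :: "nat \<Rightarrow> nat \<Rightarrow> ((nat \<Rightarrow> nat \<Rightarrow> real) \<Rightarrow> (nat \<Rightarrow> real)) set" where
  "estimators d n = measurable (Samp d n) (Rd d)"

definition risk :: "nat \<Rightarrow> nat \<Rightarrow> ((nat \<Rightarrow> nat \<Rightarrow> real) \<Rightarrow> (nat \<Rightarrow> real)) \<Rightarrow> (nat \<Rightarrow> real) measure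
     \<Rightarrow> ((nat \<Rightarrow> nat \<Rightarrow> real) \<times> (nat \<Rightarrow> bool) \<times> (nat \<Rightarrow> nat \<Rightarrow> real)) measure \<Rightarrow> ennreal" where
  "risk d n M P Q = (\<integral>\<^sup>+ \<omega>. ennreal (sqnorm d (\<lambda>i. M (zmap n \<omega>) i - mean d P i)) \<partial>Q)"

definition minimax :: "nat \<Rightarrow> nat \<Rightarrow> (nat \<Rightarrow> real) \<Rightarrow> (nat \<Rightarrow> real) measure set \<Rightarrow> ennreal" where
  "minimax d n lam D = (INF M\<in>estimators d n. SUP P\<in>D. SUP Q\<in>adversaries d n lam P. risk d n M P Q)"

text \<open>f(lam, k) = min over t in [0,1] of k / |{i : lam_i <= t}| + t^2, with k/0 = infinity.
  (The minimum is attained; we write it as an infimum.)\<close>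
definition fval :: "nat \<Rightarrow> (nat \<Rightarrow> real) \<Rightarrow> real \<Rightarrow> ennreal" where
  "fval n lam k = (INF t\<in>{0..1::real}.
      (let N = card {i\<in>{..<n}. lam i \<le> t} in
        (if N = 0 then \<infinity> else ennreal (k / real N)) + ennreal (t\<^sup>2)))"

end

theory Submission
  imports Defs
begin

text \<open>Lower bound. Let \<open>F = fval n lam 1\<close> and \<open>\<delta> = sqrt (F / 8)\<close>, and compare the laws of
  \<open>r B e\<^sub>1\<close> with \<open>B\<close> Bernoulli with parameter \<open>1/2\<close> and \<open>1/2 + \<delta>\<close>; their means are \<open>\<delta> r\<close> apart.
  Under the first law, an adversary who replaces each point with \<open>lam i \<ge> 2 \<delta>\<close> by an independent,
  suitably biased draw makes that observed point distributed as under the second law. The remaining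
  points number at most \<open>1 / (4 \<delta>\<^sup>2)\<close> by the definition of \<open>fval\<close>, so the two laws of the observed
  data have squared Hellinger affinity at least \<open>1/2\<close> and overlap at least \<open>1/4\<close>, and Le Cam's two-point
  argument gives risk at least \<open>(\<delta> r)\<^sup>2 / 16 = r\<^sup>2 F / 128\<close>.

  Upper bound. For \<open>t \<in> [0, 1]\<close> average the points with \<open>lam i \<le> t\<close>, after replacing those outside
  the ball of radius \<open>r\<close> by \<open>0\<close>. This clipping does not affect clean points, so the clean part of
  the average has mean squared error at most \<open>r\<^sup>2 / k\<close>, \<open>k\<close> the number of averaged points; each of
  the \<open>N\<close> outliers among them moves the average by at most \<open>2 r / k\<close>, and \<open>E N\<^sup>2 \<le> (k t)\<^sup>2 + k t\<close>.
  Altogether the risk is at most \<open>10 r\<^sup>2 (1 / k + t\<^sup>2)\<close>.\<close>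

lemma space_Rd: "space (Rd d) = PiE {..<d} (\<lambda>_. UNIV)"
  by (simp add: Rd_def space_PiM)

lemma space_Samp: "space (Samp d n) = PiE {..<n} (\<lambda>_. PiE {..<d} (\<lambda>_. UNIV))"
  by (simp add: Samp_def space_PiM space_Rd)

lemma space_Bsp: "space (Bsp n) = PiE {..<n} (\<lambda>_. UNIV)"
  by (simp add: Bsp_def space_PiM)

lemma measurable_coordinate_Rd: "c < d \<Longrightarrow> (\<lambda>v. v c) \<in> borel_measurable (Rd d)"
  unfolding Rd_def by (rule measurable_component_singleton) simp

lemma measurable_point_Samp: "i < n \<Longrightarrow> (\<lambda>z. z i) \<in> measurable (Samp d n) (Rd d)"
  unfolding Samp_def by (rule measurable_component_singleton) simp

lemma measurable_sqnorm [measurable]: "sqnorm d \<in> borel_measurable (Rd d)"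
  unfolding sqnorm_def[abs_def] Rd_def by measurable

lemma sqnorm_nonneg: "0 \<le> sqnorm d v"
  unfolding sqnorm_def by (intro sum_nonneg) simp

lemma coordinate_sq_le_sqnorm: "c < d \<Longrightarrow> (v c)\<^sup>2 \<le> sqnorm d v"
  unfolding sqnorm_def by (intro member_le_sum) auto

lemma sqnorm_add_le: "sqnorm d (\<lambda>c. u c + v c) \<le> 2 * sqnorm d u + 2 * sqnorm d v"
proof -
  have "(u c + v c)\<^sup>2 \<le> 2 * (u c)\<^sup>2 + 2 * (v c)\<^sup>2" for c
    using zero_le_power2[of "u c - v c"] by (simp add: power2_eq_square algebra_simps)
  then show ?thesis
    unfolding sqnorm_def by (simp add: sum_distrib_left sum.distrib[symmetric] sum_mono)
qed

section \<open>Products of probability mass functions\<close>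

lemma PiM_distr_measure_pmf:
  assumes I: "finite I" and f: "\<And>x. f x \<in> space N"
  shows "PiM I (\<lambda>i. distr (measure_pmf (p i)) N f) =
         distr (measure_pmf (Pi_pmf I dflt p)) (PiM I (\<lambda>_. N)) (\<lambda>u. \<lambda>i\<in>I. f (u i))"
proof -
  interpret product_prob_space "\<lambda>i. distr (measure_pmf (p i)) N f"
    by (intro product_prob_spaceI prob_space.prob_space_distr) (auto simp: f prob_space_measure_pmf)
  show ?thesis
  proof (rule PiM_eqI[symmetric])
    show "sets (distr (measure_pmf (Pi_pmf I dflt p)) (PiM I (\<lambda>_. N)) (\<lambda>u. \<lambda>i\<in>I. f (u i))) =
        sets (PiM I (\<lambda>i. distr (measure_pmf (p i)) N f))"
      by (simp cong: sets_PiM_cong)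
  next
    fix A assume "\<And>i. i \<in> I \<Longrightarrow> A i \<in> sets (distr (measure_pmf (p i)) N f)"
    then have A: "\<And>i. i \<in> I \<Longrightarrow> A i \<in> sets N" by simp
    then have "PiE I A \<in> sets (PiM I (\<lambda>_. N))" by (auto intro!: sets_PiM_I_finite I)
    then have "emeasure (distr (measure_pmf (Pi_pmf I dflt p)) (PiM I (\<lambda>_. N)) (\<lambda>u. \<lambda>i\<in>I. f (u i))) (PiE I A)
        = emeasure (measure_pmf (Pi_pmf I dflt p)) (Pi I (\<lambda>i. f -` A i))"
      using f by (subst emeasure_distr) (auto intro!: arg_cong2[where f=emeasure] simp: space_PiM PiE_def Pi_def)
    also have "\<dots> = ennreal (\<Prod>i\<in>I. measure_pmf.prob (p i) (f -` A i))"
      by (simp add: measure_pmf.emeasure_eq_measure measure_Pi_pmf_Pi[OF I])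
    also have "\<dots> = (\<Prod>i\<in>I. emeasure (distr (measure_pmf (p i)) N f) (A i))"
      using A f by (subst prod_ennreal[symmetric])
        (auto simp: emeasure_distr measure_pmf.emeasure_eq_measure intro!: prod.cong)
    finally show "emeasure (distr (measure_pmf (Pi_pmf I dflt p)) (PiM I (\<lambda>_. N)) (\<lambda>u. \<lambda>i\<in>I. f (u i))) (PiE I A) =
        (\<Prod>i\<in>I. emeasure (distr (measure_pmf (p i)) N f) (A i))" .
  qed (use I f in auto)
qed

lemma emeasure_pair_pmf_Times:
  "emeasure (measure_pmf (pair_pmf A B)) (X \<times> Y) = emeasure (measure_pmf A) X * emeasure (measure_pmf B) Y"
proof -
  have "emeasure (measure_pmf (pair_pmf A B)) (X \<times> Y) = (\<integral>\<^sup>+x. indicator (X \<times> Y) x \<partial>pair_pmf A B)"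
    by simp
  also have "\<dots> = (\<integral>\<^sup>+a. \<integral>\<^sup>+b. indicator X a * indicator Y b \<partial>B \<partial>A)"
    by (simp add: nn_integral_pair_pmf' indicator_times)
  also have "\<dots> = emeasure (measure_pmf A) X * emeasure (measure_pmf B) Y"
    by (simp add: nn_integral_cmult nn_integral_multc)
  finally show ?thesis .
qed

lemma distr_pair_pmf:
  assumes f: "\<And>a. f a \<in> space M" and g: "\<And>b. g b \<in> space N"
  shows "distr (measure_pmf (pair_pmf A B)) (M \<Otimes>\<^sub>M N) (\<lambda>(a, b). (f a, g b)) =
         distr (measure_pmf A) M f \<Otimes>\<^sub>M distr (measure_pmf B) N g"
proof (rule pair_measure_eqI[symmetric])
  fix X Y assume "X \<in> sets (distr (measure_pmf A) M f)" "Y \<in> sets (distr (measure_pmf B) N g)"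
  then have XY: "X \<in> sets M" "Y \<in> sets N" by simp_all
  have "emeasure (distr (measure_pmf (pair_pmf A B)) (M \<Otimes>\<^sub>M N) (\<lambda>(a, b). (f a, g b))) (X \<times> Y)
      = emeasure (measure_pmf (pair_pmf A B)) (f -` X \<times> g -` Y)"
    using XY f g by (subst emeasure_distr) (auto simp: space_pair_measure intro!: arg_cong2[where f=emeasure])
  also have "\<dots> = emeasure (distr (measure_pmf A) M f) X * emeasure (distr (measure_pmf B) N g) Y"
    using XY f g by (simp add: emeasure_pair_pmf_Times emeasure_distr)
  finally show "emeasure (distr (measure_pmf A) M f) X * emeasure (distr (measure_pmf B) N g) Y =
      emeasure (distr (measure_pmf (pair_pmf A B)) (M \<Otimes>\<^sub>M N) (\<lambda>(a, b). (f a, g b))) (X \<times> Y)" ..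
qed (use f g in \<open>auto intro!: prob_space_imp_sigma_finite prob_space.prob_space_distr
  prob_space_measure_pmf simp: space_pair_measure\<close>)

lemma map_Pi_pmf_pair_pmf:
  assumes "finite I"
  shows "map_pmf (\<lambda>w. (fst \<circ> w, snd \<circ> w)) (Pi_pmf I (dflt1, dflt2) (\<lambda>i. pair_pmf (p i) (q i))) =
         pair_pmf (Pi_pmf I dflt1 p) (Pi_pmf I dflt2 q)"
proof (rule pmf_eqI)
  fix uv :: "('a \<Rightarrow> 'b) \<times> ('a \<Rightarrow> 'c)"
  obtain u v where uv: "uv = (u, v)" by (cases uv)
  have inj: "inj (\<lambda>w::'a \<Rightarrow> 'b \<times> 'c. (fst \<circ> w, snd \<circ> w))"
    by (auto simp: inj_def fun_eq_iff prod_eq_iff)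
  define z where "z = (\<lambda>i. (u i, v i))"
  have "uv = (fst \<circ> z, snd \<circ> z)" by (simp add: uv z_def o_def)
  then have "pmf (map_pmf (\<lambda>w. (fst \<circ> w, snd \<circ> w)) (Pi_pmf I (dflt1, dflt2) (\<lambda>i. pair_pmf (p i) (q i)))) uv
      = pmf (Pi_pmf I (dflt1, dflt2) (\<lambda>i. pair_pmf (p i) (q i))) z"
    using pmf_map_inj'[OF inj] by simp
  also have "\<dots> = pmf (pair_pmf (Pi_pmf I dflt1 p) (Pi_pmf I dflt2 q)) uv"
    using assms by (auto simp: uv pmf_pair pmf_Pi z_def prod.distrib)
  finally show "pmf (map_pmf (\<lambda>w. (fst \<circ> w, snd \<circ> w)) (Pi_pmf I (dflt1, dflt2) (\<lambda>i. pair_pmf (p i) (q i)))) uv =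
      pmf (pair_pmf (Pi_pmf I dflt1 p) (Pi_pmf I dflt2 q)) uv" .
qed

lemma sum_PiE_dflt_prod:
  fixes f :: "'a \<Rightarrow> 'b::finite \<Rightarrow> 'c::comm_semiring_1"
  assumes "finite I"
  shows "(\<Sum>\<beta>\<in>PiE_dflt I dflt (\<lambda>_. UNIV). \<Prod>i\<in>I. f i (\<beta> i)) = (\<Prod>i\<in>I. \<Sum>y\<in>UNIV. f i y)"
proof -
  let ?e = "\<lambda>h x. if x \<in> I then h x else dflt"
  have inj: "inj_on ?e (PiE I (\<lambda>_. UNIV))"
    by (auto simp: inj_on_def PiE_def extensional_def fun_eq_iff) metis
  have "(\<Sum>\<beta>\<in>PiE_dflt I dflt (\<lambda>_. UNIV). \<Prod>i\<in>I. f i (\<beta> i)) = (\<Sum>h\<in>PiE I (\<lambda>_. UNIV). \<Prod>i\<in>I. f i (?e h i))"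
    by (simp add: dflt_image_PiE[symmetric] sum.reindex[OF inj])
  also have "\<dots> = (\<Sum>h\<in>PiE I (\<lambda>_. UNIV). \<Prod>i\<in>I. f i (h i))"
    by (intro sum.cong prod.cong) auto
  also have "\<dots> = (\<Prod>i\<in>I. \<Sum>y\<in>UNIV. f i y)"
    by (rule prod_sum_PiE[symmetric]) (use assms in auto)
  finally show ?thesis .
qed

section \<open>Two-point laws and an oblivious adversary\<close>

definition bit_point :: "nat \<Rightarrow> real \<Rightarrow> bool \<Rightarrow> nat \<Rightarrow> real" where
  "bit_point d r b = (\<lambda>c\<in>{..<d}. if b \<and> c = 0 then r else 0)"

definition bit_law :: "nat \<Rightarrow> real \<Rightarrow> real \<Rightarrow> (nat \<Rightarrow> real) measure" where
  "bit_law d r p = distr (measure_pmf (bernoulli_pmf p)) (Rd d) (bit_point d r)"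

lemma bit_point_in_space [simp]: "bit_point d r b \<in> space (Rd d)"
  by (simp add: space_Rd bit_point_def)

lemma sqnorm_bit_point: "sqnorm d (bit_point d r b) \<le> r\<^sup>2"
  by (cases d) (auto simp: sqnorm_def bit_point_def lessThan_Suc_eq_insert_0 sum.reindex)

lemma bit_law_in_Dball: "bit_law d r p \<in> Dball d r"
  unfolding Dball_def bit_law_def
  by (auto intro!: prob_space.prob_space_distr prob_space_measure_pmf simp: AE_distr_iff sqnorm_bit_point)

lemma mean_bit_law:
  assumes "0 < d" "0 \<le> p" "p \<le> 1"
  shows "mean d (bit_law d r p) 0 = p * r"
proof -
  have "(\<integral>x. x 0 \<partial>bit_law d r p) = (\<integral>b. bit_point d r b 0 \<partial>measure_pmf (bernoulli_pmf p))"
    unfolding bit_law_def using assms by (intro integral_distr measurable_coordinate_Rd) auto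
  then show ?thesis using assms by (simp add: mean_def bit_point_def)
qed

definition observed :: "'a \<times> bool \<times> 'a \<Rightarrow> 'a" where
  "observed = (\<lambda>(x, b, xt). if b then xt else x)"

text \<open>The bits \<open>(x, b, xt)\<close> encode \<open>(X i, B i, Xtilde i)\<close>; the outlier is drawn independently
  from \<open>bit_law d r q\<close>.\<close>

definition contaminated_bit :: "real \<Rightarrow> real \<Rightarrow> real \<Rightarrow> (bool \<times> bool \<times> bool) pmf" where
  "contaminated_bit p l q = pair_pmf (bernoulli_pmf p) (pair_pmf (bernoulli_pmf l) (bernoulli_pmf q))"

lemma map_pmf_clean_contaminated_bit:
  "map_pmf (\<lambda>(x, b, xt). (x, b)) (contaminated_bit p l q) = pair_pmf (bernoulli_pmf p) (bernoulli_pmf l)"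
proof -
  have "map_pmf (\<lambda>(x, b, xt). (x, b)) (contaminated_bit p l q) =
      map_pmf (\<lambda>(x, bxt). (id x, fst bxt)) (pair_pmf (bernoulli_pmf p) (pair_pmf (bernoulli_pmf l) (bernoulli_pmf q)))"
    unfolding contaminated_bit_def by (intro map_pmf_cong) auto
  also have "\<dots> = pair_pmf (bernoulli_pmf p) (bernoulli_pmf l)"
    by (simp only: map_pair map_fst_pair_pmf pmf.map_id)
  finally show ?thesis .
qed

lemma map_pmf_observed_contaminated_bit:
  assumes "0 \<le> p" "p \<le> 1" "0 \<le> l" "l \<le> 1" "0 \<le> q" "q \<le> 1"
  shows "map_pmf observed (contaminated_bit p l q) = bernoulli_pmf ((1 - l) * p + l * q)"
proof (rule pmf_eqI)
  fix x :: bool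
  have "(1 - l) * p + l * q \<le> (1 - l) * 1 + l * 1"
    using assms by (intro add_mono mult_left_mono) auto
  then have mix: "0 \<le> (1 - l) * p + l * q" "(1 - l) * p + l * q \<le> 1" using assms by simp_all
  have T: "observed -` {True} = {(True, True, True), (False, True, True), (True, False, True), (True, False, False)}"
    by (auto simp: observed_def)
  have F: "observed -` {False} = {(True, True, False), (False, True, False), (False, False, True), (False, False, False)}"
    by (auto simp: observed_def)
  show "pmf (map_pmf observed (contaminated_bit p l q)) x = pmf (bernoulli_pmf ((1 - l) * p + l * q)) x"
    using assms mix
    by (cases x) (simp_all add: pmf_map measure_pmf_conv_infsetsum T F contaminated_bit_def pmf_pair algebra_simps)
qed

type_synonym contaminated_sample = "(nat \<Rightarrow> nat \<Rightarrow> real) \<times> (nat \<Rightarrow> bool) \<times> (nat \<Rightarrow> nat \<Rightarrow> real)"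

definition bits_to_sample :: "nat \<Rightarrow> real \<Rightarrow> nat \<Rightarrow> (nat \<Rightarrow> bool \<times> bool \<times> bool) \<Rightarrow> contaminated_sample" where
  "bits_to_sample d r n w =
     (\<lambda>i\<in>{..<n}. bit_point d r (fst (w i)), \<lambda>i\<in>{..<n}. fst (snd (w i)), \<lambda>i\<in>{..<n}. bit_point d r (snd (snd (w i))))"

definition indep_adversary ::
    "nat \<Rightarrow> real \<Rightarrow> nat \<Rightarrow> real \<Rightarrow> (nat \<Rightarrow> real) \<Rightarrow> (nat \<Rightarrow> real) \<Rightarrow> contaminated_sample measure" where
  "indep_adversary d r n p lam q =
     distr (measure_pmf (Pi_pmf {..<n} (False, False, False) (\<lambda>i. contaminated_bit p (lam i) (q i))))
       (Samp d n \<Otimes>\<^sub>M (Bsp n \<Otimes>\<^sub>M Samp d n)) (bits_to_sample d r n)"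

lemma bits_to_sample_in_space [simp]: "bits_to_sample d r n w \<in> space (Samp d n \<Otimes>\<^sub>M (Bsp n \<Otimes>\<^sub>M Samp d n))"
  by (simp add: bits_to_sample_def space_pair_measure space_Samp space_Bsp bit_point_def)

lemma PiM_bernoulli_eq_distr_Pi_pmf:
  "PiM {..<n} (\<lambda>i. measure_pmf (bernoulli_pmf (lam i))) =
   distr (measure_pmf (Pi_pmf {..<n} dflt (\<lambda>i. bernoulli_pmf (lam i)))) (Bsp n) (\<lambda>u. \<lambda>i\<in>{..<n}. u i)"
proof -
  have "PiM {..<n} (\<lambda>i. measure_pmf (bernoulli_pmf (lam i))) =
      PiM {..<n} (\<lambda>i. distr (measure_pmf (bernoulli_pmf (lam i))) (count_space UNIV) (\<lambda>x. x))"
    by (intro PiM_cong refl distr_id2[symmetric]) simp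
  also have "\<dots> = distr (measure_pmf (Pi_pmf {..<n} dflt (\<lambda>i. bernoulli_pmf (lam i)))) (Bsp n) (\<lambda>u. \<lambda>i\<in>{..<n}. u i)"
    unfolding Bsp_def by (rule PiM_distr_measure_pmf) simp_all
  finally show ?thesis .
qed

lemma indep_adversary_in_adversaries:
  "indep_adversary d r n p lam q \<in> adversaries d n lam (bit_law d r p)"
proof -
  let ?W = "Pi_pmf {..<n} (False, False, False) (\<lambda>i. contaminated_bit p (lam i) (q i))"
  let ?clean = "\<lambda>w. (fst \<circ> w, fst \<circ> snd \<circ> w)"
  let ?embed = "\<lambda>(u, b). (\<lambda>i\<in>{..<n}. bit_point d r (u i), \<lambda>i\<in>{..<n}. b i)"
  have clean_bits: "map_pmf ?clean ?W =
      pair_pmf (Pi_pmf {..<n} False (\<lambda>_. bernoulli_pmf p)) (Pi_pmf {..<n} False (\<lambda>i. bernoulli_pmf (lam i)))"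
  proof -
    have "map_pmf ?clean ?W = map_pmf (\<lambda>w. (fst \<circ> w, snd \<circ> w)) (map_pmf (\<lambda>w. (\<lambda>(x, b, xt). (x, b)) \<circ> w) ?W)"
      by (simp add: pmf.map_comp o_def case_prod_beta)
    also have "map_pmf (\<lambda>w. (\<lambda>(x, b, xt). (x, b)) \<circ> w) ?W =
        Pi_pmf {..<n} (False, False) (\<lambda>i. pair_pmf (bernoulli_pmf p) (bernoulli_pmf (lam i)))"
      by (subst Pi_pmf_map[symmetric]) (simp_all add: map_pmf_clean_contaminated_bit)
    also have "map_pmf (\<lambda>w. (fst \<circ> w, snd \<circ> w)) \<dots> =
        pair_pmf (Pi_pmf {..<n} False (\<lambda>_. bernoulli_pmf p)) (Pi_pmf {..<n} False (\<lambda>i. bernoulli_pmf (lam i)))"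
      by (rule map_Pi_pmf_pair_pmf) simp
    finally show ?thesis .
  qed
  have "distr (indep_adversary d r n p lam q) (Samp d n \<Otimes>\<^sub>M Bsp n) (\<lambda>(x, b, xt). (x, b)) =
      distr (measure_pmf ?W) (Samp d n \<Otimes>\<^sub>M Bsp n) (?embed \<circ> ?clean)"
  proof -
    have "(\<lambda>(x, b, xt). (x, b)) \<in> measurable (Samp d n \<Otimes>\<^sub>M (Bsp n \<Otimes>\<^sub>M Samp d n)) (Samp d n \<Otimes>\<^sub>M Bsp n)"
      by measurable
    then show ?thesis unfolding indep_adversary_def
      by (subst distr_distr) (auto simp: Pi_iff intro!: distr_cong, auto simp: bits_to_sample_def o_def)
  qed
  also have "\<dots> = distr (measure_pmf (map_pmf ?clean ?W)) (Samp d n \<Otimes>\<^sub>M Bsp n) ?embed"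
    by (simp add: map_pmf_rep_eq distr_distr space_pair_measure space_Samp space_Bsp bit_point_def Pi_iff)
  also have "\<dots> = distr (measure_pmf (Pi_pmf {..<n} False (\<lambda>_. bernoulli_pmf p))) (Samp d n)
        (\<lambda>u. \<lambda>i\<in>{..<n}. bit_point d r (u i)) \<Otimes>\<^sub>M
      distr (measure_pmf (Pi_pmf {..<n} False (\<lambda>i. bernoulli_pmf (lam i)))) (Bsp n) (\<lambda>u. \<lambda>i\<in>{..<n}. u i)"
    unfolding clean_bits by (rule distr_pair_pmf) (simp_all add: space_Samp space_Bsp bit_point_def)
  also have "\<dots> = clean_law d n lam (bit_law d r p)"
    unfolding clean_law_def PiM_bernoulli_eq_distr_Pi_pmf[where dflt=False]
    by (simp add: bit_law_def Samp_def PiM_distr_measure_pmf[where dflt=False])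
  finally show ?thesis
    unfolding adversaries_def
    by (auto simp: indep_adversary_def intro!: prob_space.prob_space_distr prob_space_measure_pmf)
qed

lemma measurable_zmap [measurable]:
  "zmap n \<in> measurable (Samp d n \<Otimes>\<^sub>M (Bsp n \<Otimes>\<^sub>M Samp d n)) (Samp d n)"
  unfolding zmap_def Samp_def Bsp_def case_prod_beta by measurable

lemma measurable_risk_integrand [measurable]:
  assumes "M \<in> estimators d n"
  shows "(\<lambda>\<omega>. ennreal (sqnorm d (\<lambda>c. M (zmap n \<omega>) c - \<mu> c))) \<in> borel_measurable (Samp d n \<Otimes>\<^sub>M (Bsp n \<Otimes>\<^sub>M Samp d n))"
proof -
  have [measurable]: "M \<in> measurable (Samp d n) (PiM {..<d} (\<lambda>_. borel))"
    using assms by (simp add: estimators_def Rd_def)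
  show ?thesis unfolding sqnorm_def by measurable
qed

lemma risk_indep_adversary:
  assumes M: "M \<in> estimators d n" and p: "0 \<le> p" "p \<le> 1"
    and lam: "\<And>i. i < n \<Longrightarrow> 0 \<le> lam i \<and> lam i \<le> 1" and q: "\<And>i. i < n \<Longrightarrow> 0 \<le> q i \<and> q i \<le> 1"
  shows "risk d n M P (indep_adversary d r n p lam q) =
    (\<integral>\<^sup>+\<beta>. sqnorm d (\<lambda>c. M (\<lambda>i\<in>{..<n}. bit_point d r (\<beta> i)) c - mean d P c)
       \<partial>Pi_pmf {..<n} False (\<lambda>i. bernoulli_pmf ((1 - lam i) * p + lam i * q i)))"
proof -
  let ?W = "Pi_pmf {..<n} (False, False, False) (\<lambda>i. contaminated_bit p (lam i) (q i))"
  let ?g = "\<lambda>z. ennreal (sqnorm d (\<lambda>c. M z c - mean d P c))"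
  have "risk d n M P (indep_adversary d r n p lam q) = (\<integral>\<^sup>+w. ?g (zmap n (bits_to_sample d r n w)) \<partial>?W)"
    unfolding risk_def indep_adversary_def using M by (subst nn_integral_distr) (auto simp: Pi_iff)
  also have "\<dots> = (\<integral>\<^sup>+w. ?g (\<lambda>i\<in>{..<n}. bit_point d r ((observed \<circ> w) i)) \<partial>?W)"
    by (intro nn_integral_cong arg_cong[where f="?g"])
      (auto simp: zmap_def bits_to_sample_def observed_def case_prod_beta)
  also have "\<dots> = (\<integral>\<^sup>+\<beta>. ?g (\<lambda>i\<in>{..<n}. bit_point d r (\<beta> i)) \<partial>map_pmf (\<lambda>w. observed \<circ> w) ?W)"
    by simp
  also have "map_pmf (\<lambda>w. observed \<circ> w) ?W =
      Pi_pmf {..<n} (observed (False, False, False)) (\<lambda>i. map_pmf observed (contaminated_bit p (lam i) (q i)))"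
    by (rule Pi_pmf_map[symmetric]) simp_all
  also have "\<dots> = Pi_pmf {..<n} False (\<lambda>i. bernoulli_pmf ((1 - lam i) * p + lam i * q i))"
    by (intro Pi_pmf_cong) (simp_all add: map_pmf_observed_contaminated_bit p lam q, simp add: observed_def)
  finally show ?thesis .
qed

section \<open>Le Cam's two-point method\<close>

lemma nn_integral_pmf_eq_sum:
  fixes g :: "'a \<Rightarrow> real"
  assumes "finite S" "set_pmf \<pi> \<subseteq> S" "\<And>x. x \<in> S \<Longrightarrow> 0 \<le> g x"
  shows "(\<integral>\<^sup>+x. g x \<partial>\<pi>) = ennreal (\<Sum>x\<in>S. g x * pmf \<pi> x)"
proof -
  have "(\<integral>\<^sup>+x. g x \<partial>\<pi>) = (\<Sum>x\<in>S. ennreal (g x * pmf \<pi> x))"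
    using assms by (subst nn_integral_measure_pmf_support[of S]) (auto simp: ennreal_mult set_pmf_eq)
  also have "\<dots> = ennreal (\<Sum>x\<in>S. g x * pmf \<pi> x)"
    using assms by (intro sum_ennreal) auto
  finally show ?thesis .
qed

lemma le_cam_two_point:
  fixes g0 g1 :: "'a \<Rightarrow> real"
  assumes S: "finite S" "set_pmf \<pi>0 \<subseteq> S" "set_pmf \<pi>1 \<subseteq> S"
    and g: "\<And>x. x \<in> S \<Longrightarrow> 0 \<le> g0 x \<and> 0 \<le> g1 x \<and> D \<le> g0 x + g1 x"
  shows "ennreal (D * (\<Sum>x\<in>S. min (pmf \<pi>0 x) (pmf \<pi>1 x))) \<le> (\<integral>\<^sup>+x. g0 x \<partial>\<pi>0) + (\<integral>\<^sup>+x. g1 x \<partial>\<pi>1)"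
proof -
  have "D * (\<Sum>x\<in>S. min (pmf \<pi>0 x) (pmf \<pi>1 x)) \<le> (\<Sum>x\<in>S. g0 x * pmf \<pi>0 x) + (\<Sum>x\<in>S. g1 x * pmf \<pi>1 x)"
    unfolding sum_distrib_left sum.distrib[symmetric]
  proof (rule sum_mono)
    fix x assume x: "x \<in> S"
    have "D * min (pmf \<pi>0 x) (pmf \<pi>1 x) \<le> (g0 x + g1 x) * min (pmf \<pi>0 x) (pmf \<pi>1 x)"
      using g[OF x] by (intro mult_right_mono) auto
    also have "\<dots> \<le> g0 x * pmf \<pi>0 x + g1 x * pmf \<pi>1 x"
      using g[OF x] by (simp add: distrib_right add_mono mult_left_mono)
    finally show "D * min (pmf \<pi>0 x) (pmf \<pi>1 x) \<le> g0 x * pmf \<pi>0 x + g1 x * pmf \<pi>1 x" .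
  qed
  then show ?thesis
    using g by (simp add: nn_integral_pmf_eq_sum[OF S(1,2)] nn_integral_pmf_eq_sum[OF S(1,3)]
        ennreal_plus[symmetric] sum_nonneg del: ennreal_plus)
qed

lemma sum_sqrt_pmf_mult_sq_le:
  assumes "finite S"
  shows "(\<Sum>x\<in>S. sqrt (pmf p x * pmf q x))\<^sup>2 \<le> 2 * (\<Sum>x\<in>S. min (pmf p x) (pmf q x))"
proof -
  let ?lo = "\<lambda>x. min (pmf p x) (pmf q x)" and ?hi = "\<lambda>x. max (pmf p x) (pmf q x)"
  have "(\<Sum>x\<in>S. sqrt (pmf p x * pmf q x))\<^sup>2 = (\<Sum>x\<in>S. sqrt (?lo x) * sqrt (?hi x))\<^sup>2"
    by (intro arg_cong[where f="\<lambda>x. x\<^sup>2"] sum.cong refl)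
      (simp add: real_sqrt_mult[symmetric] min_def max_def mult.commute)
  also have "\<dots> \<le> (\<Sum>x\<in>S. (sqrt (?lo x))\<^sup>2) * (\<Sum>x\<in>S. (sqrt (?hi x))\<^sup>2)"
    by (rule Cauchy_Schwarz_ineq_sum)
  also have "\<dots> = (\<Sum>x\<in>S. ?lo x) * (\<Sum>x\<in>S. ?hi x)"
    by (simp add: le_max_iff_disj)
  also have "\<dots> \<le> (\<Sum>x\<in>S. ?lo x) * 2"
  proof (rule mult_left_mono)
    have "(\<Sum>x\<in>S. ?hi x) \<le> (\<Sum>x\<in>S. pmf p x) + (\<Sum>x\<in>S. pmf q x)"
      by (simp add: sum.distrib[symmetric] sum_mono)
    also have "\<dots> \<le> 1 + 1"
      using assms by (intro add_mono) (simp_all add: measure_measure_pmf_finite[symmetric])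
    finally show "(\<Sum>x\<in>S. ?hi x) \<le> 2" by simp
  qed (simp add: sum_nonneg)
  finally show ?thesis by simp
qed

lemma real_sqrt_prod: "sqrt (prod f A) = (\<Prod>i\<in>A. sqrt (f i))"
  by (induction A rule: infinite_finite_induct) (auto simp: real_sqrt_mult)

lemma sum_sqrt_pmf_mult_Pi_pmf:
  fixes p q :: "'a \<Rightarrow> 'b::finite pmf"
  assumes "finite I"
  shows "(\<Sum>\<beta>\<in>PiE_dflt I dflt (\<lambda>_. UNIV). sqrt (pmf (Pi_pmf I dflt p) \<beta> * pmf (Pi_pmf I dflt q) \<beta>)) =
         (\<Prod>i\<in>I. \<Sum>y\<in>UNIV. sqrt (pmf (p i) y * pmf (q i) y))"
proof -
  have "(\<Sum>\<beta>\<in>PiE_dflt I dflt (\<lambda>_. UNIV). sqrt (pmf (Pi_pmf I dflt p) \<beta> * pmf (Pi_pmf I dflt q) \<beta>)) =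
      (\<Sum>\<beta>\<in>PiE_dflt I dflt (\<lambda>_. UNIV). \<Prod>i\<in>I. sqrt (pmf (p i) (\<beta> i) * pmf (q i) (\<beta> i)))"
    using assms by (intro sum.cong refl) (simp add: pmf_Pi' PiE_dflt_def real_sqrt_prod prod.distrib[symmetric])
  also have "\<dots> = (\<Prod>i\<in>I. \<Sum>y\<in>UNIV. sqrt (pmf (p i) y * pmf (q i) y))"
    by (rule sum_PiE_dflt_prod) fact
  finally show ?thesis .
qed

text \<open>Tensorisation of the Hellinger affinity: product laws that differ in few factors, each
  by little, overlap substantially.\<close>

lemma sum_min_pmf_Pi_pmf_ge:
  fixes p q :: "'a \<Rightarrow> 'b::finite pmf"
  assumes I: "finite I" "K \<subseteq> I" and eq: "\<And>i. i \<in> I - K \<Longrightarrow> p i = q i"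
    and affinity: "\<And>i. i \<in> K \<Longrightarrow> 1 - \<epsilon> \<le> (\<Sum>y\<in>UNIV. sqrt (pmf (p i) y * pmf (q i) y))\<^sup>2"
    and \<epsilon>: "\<epsilon> \<le> 1" "real (card K) * \<epsilon> \<le> 1/2"
  shows "1/4 \<le> (\<Sum>\<beta>\<in>PiE_dflt I dflt (\<lambda>_. UNIV). min (pmf (Pi_pmf I dflt p) \<beta>) (pmf (Pi_pmf I dflt q) \<beta>))"
proof -
  define s where "s i = (\<Sum>y\<in>UNIV. sqrt (pmf (p i) y * pmf (q i) y))" for i
  have s1: "s i = 1" if "i \<in> I - K" for i
    using eq[OF that] by (simp add: s_def sum_pmf_eq_1)
  have "1 + real (card K) * - \<epsilon> \<le> (1 + - \<epsilon>) ^ card K"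
    using \<epsilon> by (intro Bernoulli_inequality) simp
  also have "\<dots> = (\<Prod>i\<in>K. 1 - \<epsilon>)" by simp
  also have "\<dots> \<le> (\<Prod>i\<in>K. (s i)\<^sup>2)"
    using affinity \<epsilon> by (intro prod_mono) (simp add: s_def)
  also have "\<dots> = (\<Prod>i\<in>I. s i)\<^sup>2"
    using I s1 by (simp add: prod_power_distrib[symmetric] prod.subset_diff[of K I])
  also have "\<dots> \<le> 2 * (\<Sum>\<beta>\<in>PiE_dflt I dflt (\<lambda>_. UNIV). min (pmf (Pi_pmf I dflt p) \<beta>) (pmf (Pi_pmf I dflt q) \<beta>))"
    using sum_sqrt_pmf_mult_sq_le[of "PiE_dflt I dflt (\<lambda>_. UNIV)" "Pi_pmf I dflt p" "Pi_pmf I dflt q"]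
      sum_sqrt_pmf_mult_Pi_pmf[OF I(1), of dflt p q] I
    by (simp add: s_def finite_PiE_dflt)
  finally show ?thesis using \<epsilon> by simp
qed

lemma bernoulli_affinity_sq_ge:
  assumes "0 \<le> \<delta>" "\<delta> \<le> 1/2"
  shows "1 - 2 * \<delta>\<^sup>2 \<le> (\<Sum>y\<in>UNIV. sqrt (pmf (bernoulli_pmf (1/2)) y * pmf (bernoulli_pmf (1/2 + \<delta>)) y))\<^sup>2"
proof -
  define a where "a = 1/2 * (1/2 + \<delta>)"
  define b where "b = 1/2 * (1/2 - \<delta>)"
  have ab: "0 \<le> a" "0 \<le> b" "a + b = 1/2" "a * b = 1/4 * (1/4 - \<delta>\<^sup>2)"
    using assms by (simp_all add: a_def b_def algebra_simps power2_eq_square)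
  have "\<delta>\<^sup>2 \<le> (1/2)\<^sup>2" using assms by (intro power_mono) auto
  then have x: "0 \<le> 1/4 - \<delta>\<^sup>2" "1/4 - \<delta>\<^sup>2 \<le> 1/4" by (simp_all add: power2_eq_square)
  have "1/4 - \<delta>\<^sup>2 \<le> sqrt (a * b)"
    unfolding ab(4) using mult_right_mono[OF x(2) x(1)] x by (intro real_le_rsqrt) (simp add: power2_eq_square)
  then have "1 - 2 * \<delta>\<^sup>2 \<le> a + b + 2 * sqrt (a * b)" using ab(3) by linarith
  also have "\<dots> = (sqrt a + sqrt b)\<^sup>2"
    using ab by (simp add: power2_sum real_sqrt_mult)
  also have "sqrt a + sqrt b = (\<Sum>y\<in>UNIV. sqrt (pmf (bernoulli_pmf (1/2)) y * pmf (bernoulli_pmf (1/2 + \<delta>)) y))"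
  proof -
    have "pmf (bernoulli_pmf (1/2)) True * pmf (bernoulli_pmf (1/2 + \<delta>)) True = a"
      "pmf (bernoulli_pmf (1/2)) False * pmf (bernoulli_pmf (1/2 + \<delta>)) False = b"
      using assms by (simp_all add: a_def b_def)
    moreover have "(\<Sum>y\<in>UNIV. f y) = f True + f False" for f :: "bool \<Rightarrow> real"
      by (simp add: UNIV_bool)
    ultimately show ?thesis by simp
  qed
  finally show ?thesis .
qed

section \<open>The lower bound\<close>

lemma fval_le:
  assumes "0 \<le> t" "t \<le> 1" "card {i\<in>{..<n}. lam i \<le> t} \<noteq> 0" "0 \<le> k"
  shows "fval n lam k \<le> ennreal (k / card {i\<in>{..<n}. lam i \<le> t} + t\<^sup>2)"
proof -
  have "fval n lam k \<le> (let N = card {i\<in>{..<n}. lam i \<le> t} in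
        (if N = 0 then \<infinity> else ennreal (k / real N)) + ennreal (t\<^sup>2))"
    unfolding fval_def by (rule INF_lower) (use assms in auto)
  also have "\<dots> = ennreal (k / card {i\<in>{..<n}. lam i \<le> t} + t\<^sup>2)"
    using assms by (simp add: Let_def ennreal_plus)
  finally show ?thesis .
qed

lemma fval_le_2:
  assumes "0 < n" "\<forall>i<n. lam i \<le> 1"
  shows "fval n lam 1 \<le> 2"
proof -
  have n: "{i\<in>{..<n}. lam i \<le> 1} = {..<n}" using assms by auto
  have "fval n lam 1 \<le> ennreal (1 / card {i\<in>{..<n}. lam i \<le> 1} + 1\<^sup>2)"
    by (rule fval_le) (use assms n in auto)
  also have "\<dots> \<le> ennreal 2" unfolding n using assms by (intro ennreal_leI) auto
  finally show ?thesis by simp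
qed

text \<open>Take \<open>t\<close> to be the largest \<open>lam i\<close> below \<open>s\<close> in the infimum defining \<open>fval\<close>.\<close>

lemma card_lam_less_mult_le:
  assumes lam: "\<forall>i<n. 0 \<le> lam i \<and> lam i \<le> 1" and F: "ennreal F \<le> fval n lam 1"
  shows "real (card {i. i < n \<and> lam i < s}) * (F - s\<^sup>2) \<le> 1"
proof (cases "{i. i < n \<and> lam i < s} = {}")
  case False
  define K where "K = {i. i < n \<and> lam i < s}"
  define t where "t = Max (lam ` K)"
  have finK: "finite K" by (simp add: K_def)
  then have "t \<in> lam ` K" using False unfolding t_def K_def by (intro Max_in) auto
  then have t: "0 \<le> t" "t \<le> 1" "t < s" using lam by (auto simp: K_def)
  have "K \<subseteq> {i\<in>{..<n}. lam i \<le> t}"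
    unfolding t_def using finK by (auto simp: K_def intro!: Max_ge)
  then have card_le: "card K \<le> card {i\<in>{..<n}. lam i \<le> t}" by (intro card_mono) auto
  have K_pos: "0 < card K" using False finK by (simp add: K_def card_gt_0_iff)
  have "card {i\<in>{..<n}. lam i \<le> t} \<noteq> 0" using card_le K_pos by linarith
  then have "fval n lam 1 \<le> ennreal (1 / card {i\<in>{..<n}. lam i \<le> t} + t\<^sup>2)"
    by (intro fval_le) (use t in auto)
  with F have "ennreal F \<le> ennreal (1 / card {i\<in>{..<n}. lam i \<le> t} + t\<^sup>2)" by (rule order_trans)
  then have "F \<le> 1 / card {i\<in>{..<n}. lam i \<le> t} + t\<^sup>2"
    by (subst (asm) ennreal_le_iff) (simp_all del: ennreal_plus)
  also have "\<dots> \<le> 1 / card K + s\<^sup>2"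
    using card_le K_pos t by (intro add_mono divide_left_mono power_mono) auto
  finally have "F - s\<^sup>2 \<le> 1 / card K" by simp
  then have "card K * (F - s\<^sup>2) \<le> card K * (1 / card K)" by (intro mult_left_mono) auto
  also have "\<dots> = 1" using K_pos by simp
  finally show ?thesis by (simp only: K_def)
next
  case True
  then show ?thesis by (simp only: card.empty)
qed

lemma half_sq_diff_le_sqnorm_add:
  assumes "c < d"
  shows "(\<mu>0 c - \<mu>1 c)\<^sup>2 / 2 \<le> sqnorm d (\<lambda>j. m j - \<mu>0 j) + sqnorm d (\<lambda>j. m j - \<mu>1 j)"
proof -
  have "(\<mu>0 c - \<mu>1 c)\<^sup>2 / 2 \<le> (m c - \<mu>0 c)\<^sup>2 + (m c - \<mu>1 c)\<^sup>2"
    using zero_le_power2[of "2 * m c - \<mu>0 c - \<mu>1 c"] by (simp add: power2_eq_square field_simps)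
  also have "\<dots> \<le> sqnorm d (\<lambda>j. m j - \<mu>0 j) + sqnorm d (\<lambda>j. m j - \<mu>1 j)"
    using assms by (intro add_mono coordinate_sq_le_sqnorm[where v="\<lambda>j. m j - _ j", simplified])
  finally show ?thesis .
qed

text \<open>The bias of the outliers that makes a \<open>Bernoulli (1/2)\<close> bit, replaced with probability
  \<open>l \<ge> 2 \<delta>\<close>, be observed as a \<open>Bernoulli (1/2 + \<delta>)\<close> bit.\<close>

definition shift_bias :: "real \<Rightarrow> real \<Rightarrow> real" where
  "shift_bias \<delta> l = (if 2 * \<delta> \<le> l then 1/2 + \<delta> / l else 1/2)"

lemma shift_bias_bounds:
  assumes "0 \<le> \<delta>"
  shows "0 \<le> shift_bias \<delta> l \<and> shift_bias \<delta> l \<le> 1"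
proof (cases "2 * \<delta> \<le> l")
  case True
  then have "0 \<le> \<delta> / l" "\<delta> / l \<le> 1/2" using assms by (auto simp: divide_simps)
  moreover have "shift_bias \<delta> l = 1/2 + \<delta> / l" using True by (simp add: shift_bias_def)
  ultimately show ?thesis by linarith
qed (simp add: shift_bias_def)

lemma mix_shift_bias:
  assumes "0 \<le> \<delta>"
  shows "(1 - l) * (1/2) + l * shift_bias \<delta> l = (if l < 2 * \<delta> then 1/2 else 1/2 + \<delta>)"
proof (cases "2 * \<delta> \<le> l")
  case True
  show ?thesis
  proof (cases "l = 0")
    case True
    with \<open>2 * \<delta> \<le> l\<close> assms have "\<delta> = 0" by simp
    then show ?thesis using True by (simp add: shift_bias_def)
  qed (use True in \<open>simp add: shift_bias_def field_simps\<close>)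
qed (simp add: shift_bias_def field_simps)

lemma sum_min_Pi_bernoulli_ge:
  assumes I: "finite I" "K \<subseteq> I" and \<delta>: "0 \<le> \<delta>" "\<delta> \<le> 1/2" and card: "real (card K) * \<delta>\<^sup>2 \<le> 1/4"
  shows "1/4 \<le> (\<Sum>\<beta>\<in>PiE_dflt I dflt (\<lambda>_. UNIV).
    min (pmf (Pi_pmf I dflt (\<lambda>i. bernoulli_pmf (if i \<in> K then 1/2 else 1/2 + \<delta>))) \<beta>)
        (pmf (Pi_pmf I dflt (\<lambda>_. bernoulli_pmf (1/2 + \<delta>))) \<beta>))"
proof (rule sum_min_pmf_Pi_pmf_ge[OF I, where \<epsilon>="2 * \<delta>\<^sup>2"])
  show "1 - 2 * \<delta>\<^sup>2 \<le> (\<Sum>y\<in>UNIV. sqrt (pmf (bernoulli_pmf (if i \<in> K then 1/2 else 1/2 + \<delta>)) y *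
      pmf (bernoulli_pmf (1/2 + \<delta>)) y))\<^sup>2" if "i \<in> K" for i
    using that bernoulli_affinity_sq_ge[OF \<delta>] by simp
  have "\<delta>\<^sup>2 \<le> (1/2)\<^sup>2" using \<delta> by (intro power_mono) auto
  then show "2 * \<delta>\<^sup>2 \<le> 1" by (simp add: power2_eq_square)
qed (use card in auto)

lemma sup_risk_ge_half_sum:
  assumes "P0 \<in> D" "Q0 \<in> adversaries d n lam P0" "P1 \<in> D" "Q1 \<in> adversaries d n lam P1"
    and sum: "ennreal (2 * x) \<le> risk d n M P0 Q0 + risk d n M P1 Q1"
  shows "ennreal x \<le> (SUP P\<in>D. SUP Q\<in>adversaries d n lam P. risk d n M P Q)"
proof -
  let ?sup = "SUP P\<in>D. SUP Q\<in>adversaries d n lam P. risk d n M P Q"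
  have "risk d n M P0 Q0 \<le> ?sup" "risk d n M P1 Q1 \<le> ?sup"
    using assms(1-4) by (auto intro: SUP_upper2)
  then have "ennreal (2 * x) \<le> 2 * ?sup"
    using sum unfolding mult_2 by (blast intro: order_trans add_mono)
  then have "2 * ennreal x \<le> 2 * ?sup"
    by (simp only: ennreal_mult'[of 2] ennreal_numeral zero_le_numeral)
  then show ?thesis by (subst (asm) ennreal_mult_le_mult_iff) auto
qed

lemma sup_risk_ge_two_point:
  assumes d: "0 < d" and lam: "\<And>i. i < n \<Longrightarrow> 0 \<le> lam i \<and> lam i \<le> 1" and M: "M \<in> estimators d n"
    and \<delta>: "0 \<le> \<delta>" "\<delta> \<le> 1/2" and card: "real (card {i. i < n \<and> lam i < 2 * \<delta>}) * \<delta>\<^sup>2 \<le> 1/4"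
  shows "ennreal ((\<delta> * r)\<^sup>2 / 16) \<le> (SUP P\<in>Dball d r. SUP Q\<in>adversaries d n lam P. risk d n M P Q)"
proof -
  define K where "K = {i. i < n \<and> lam i < 2 * \<delta>}"
  define q where "q i = shift_bias \<delta> (lam i)" for i
  define \<pi>0 where "\<pi>0 = Pi_pmf {..<n} False (\<lambda>i. bernoulli_pmf (if i \<in> K then 1/2 else 1/2 + \<delta>))"
  define \<pi>1 where "\<pi>1 = Pi_pmf {..<n} False (\<lambda>_. bernoulli_pmf (1/2 + \<delta>))"
  define P0 where "P0 = bit_law d r (1/2)"
  define P1 where "P1 = bit_law d r (1/2 + \<delta>)"
  define Q0 where "Q0 = indep_adversary d r n (1/2) lam q"
  define Q1 where "Q1 = indep_adversary d r n (1/2 + \<delta>) lam (\<lambda>_. 1/2 + \<delta>)"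
  define g where "g P \<beta> = sqnorm d (\<lambda>c. M (\<lambda>i\<in>{..<n}. bit_point d r (\<beta> i)) c - mean d P c)" for P \<beta>
  have \<pi>0_eq: "Pi_pmf {..<n} False (\<lambda>i. bernoulli_pmf ((1 - lam i) * (1/2) + lam i * q i)) = \<pi>0"
    unfolding \<pi>0_def q_def
    by (intro Pi_pmf_cong refl arg_cong[where f=bernoulli_pmf]) (subst mix_shift_bias[OF \<delta>(1)], auto simp: K_def)
  have R0: "risk d n M P0 Q0 = (\<integral>\<^sup>+\<beta>. g P0 \<beta> \<partial>\<pi>0)"
    unfolding g_def P0_def Q0_def \<pi>0_eq[symmetric]
    by (rule risk_indep_adversary[OF M]) (use lam \<delta> in \<open>auto simp: q_def shift_bias_bounds\<close>)
  have \<pi>1_eq: "Pi_pmf {..<n} False (\<lambda>i. bernoulli_pmf ((1 - lam i) * (1/2 + \<delta>) + lam i * (1/2 + \<delta>))) = \<pi>1"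
    unfolding \<pi>1_def by (intro Pi_pmf_cong arg_cong[where f=bernoulli_pmf]) (simp_all add: field_simps)
  have R1: "risk d n M P1 Q1 = (\<integral>\<^sup>+\<beta>. g P1 \<beta> \<partial>\<pi>1)"
    unfolding g_def P1_def Q1_def \<pi>1_eq[symmetric] by (rule risk_indep_adversary[OF M]) (use lam \<delta> in auto)
  have sep: "(\<delta> * r)\<^sup>2 / 2 \<le> g P0 \<beta> + g P1 \<beta>" for \<beta>
    using half_sq_diff_le_sqnorm_add[OF d, of "mean d P0" "mean d P1"] d \<delta>
    by (simp add: g_def P0_def P1_def mean_bit_law algebra_simps power2_eq_square)
  let ?S = "PiE_dflt {..<n} False (\<lambda>_. UNIV)"
  have support: "set_pmf (Pi_pmf {..<n} False p) \<subseteq> ?S" for p :: "nat \<Rightarrow> bool pmf"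
    using set_Pi_pmf_subset'[of "{..<n}" False p] by (auto simp: PiE_dflt_def)
  have "1/4 \<le> (\<Sum>\<beta>\<in>?S. min (pmf \<pi>0 \<beta>) (pmf \<pi>1 \<beta>))"
    unfolding \<pi>0_def \<pi>1_def using \<delta> card by (intro sum_min_Pi_bernoulli_ge) (auto simp: K_def)
  from mult_left_mono[OF this, of "(\<delta> * r)\<^sup>2 / 2"]
  have "ennreal (2 * ((\<delta> * r)\<^sup>2 / 16)) \<le> ennreal ((\<delta> * r)\<^sup>2 / 2 * (\<Sum>\<beta>\<in>?S. min (pmf \<pi>0 \<beta>) (pmf \<pi>1 \<beta>)))"
    by (intro ennreal_leI) simp
  also have "\<dots> \<le> risk d n M P0 Q0 + risk d n M P1 Q1"
    unfolding R0 R1 by (rule le_cam_two_point) (use sep in \<open>auto simp: \<pi>0_def \<pi>1_def support g_def sqnorm_nonneg\<close>)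
  finally show ?thesis
    by (rule sup_risk_ge_half_sum[rotated -1])
      (simp_all add: P0_def P1_def Q0_def Q1_def bit_law_in_Dball indep_adversary_in_adversaries)
qed

lemma minimax_ge:
  assumes d: "0 < d" and n: "0 < n" and lam: "\<forall>i<n. 0 \<le> lam i \<and> lam i \<le> 1"
  shows "ennreal (r\<^sup>2 / 128) * fval n lam 1 \<le> minimax d n lam (Dball d r)"
proof -
  have f2: "fval n lam 1 \<le> 2" using fval_le_2 n lam by auto
  then obtain F where F: "fval n lam 1 = ennreal F" "0 \<le> F"
    by (cases "fval n lam 1" rule: ennreal_cases) (auto simp: top_unique)
  have "F \<le> 2" using f2 F by (metis ennreal_le_iff ennreal_numeral zero_le_numeral)
  define \<delta> where "\<delta> = sqrt (F / 8)"
  have \<delta>: "0 \<le> \<delta>" "\<delta>\<^sup>2 = F / 8" using F by (simp_all add: \<delta>_def)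
  have "\<delta> \<le> sqrt (1/4)" unfolding \<delta>_def using \<open>F \<le> 2\<close> by simp
  then have \<delta>_le: "\<delta> \<le> 1/2" by (simp add: real_sqrt_divide)
  have "real (card {i. i < n \<and> lam i < 2 * \<delta>}) * (F - (2 * \<delta>)\<^sup>2) \<le> 1"
    by (rule card_lam_less_mult_le) (use lam F in simp_all)
  moreover have "F - (2 * \<delta>)\<^sup>2 = 4 * \<delta>\<^sup>2" using \<delta> by (simp add: power_mult_distrib)
  ultimately have card: "real (card {i. i < n \<and> lam i < 2 * \<delta>}) * \<delta>\<^sup>2 \<le> 1/4"
    by (simp add: field_simps)
  have "ennreal (r\<^sup>2 / 128) * fval n lam 1 = ennreal ((\<delta> * r)\<^sup>2 / 16)"
    using F \<delta> by (simp add: ennreal_mult[symmetric] power_mult_distrib)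
  also have "\<dots> \<le> minimax d n lam (Dball d r)"
    unfolding minimax_def using d lam \<delta> \<delta>_le card
    by (intro INF_greatest sup_risk_ge_two_point) auto
  finally show ?thesis .
qed

lemma integral_PiM_prod_components:
  fixes h :: "'i \<Rightarrow> 'a \<Rightarrow> real"
  assumes M: "\<And>i. prob_space (M i)" and I: "finite I" "J \<subseteq> I"
    and h: "\<And>j. j \<in> J \<Longrightarrow> integrable (M j) (h j)"
  shows "integrable (PiM I M) (\<lambda>x. \<Prod>j\<in>J. h j (x j))"
    and "(\<integral>x. (\<Prod>j\<in>J. h j (x j)) \<partial>PiM I M) = (\<Prod>j\<in>J. \<integral>y. h j y \<partial>M j)"
proof -
  interpret product_prob_space M by (intro product_prob_spaceI M)
  let ?h = "\<lambda>j y. if j \<in> J then h j y else 1"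
  have [simp]: "(\<Prod>j\<in>I. ?h j (x j)) = (\<Prod>j\<in>J. h j (x j))" for x
    using I by (simp add: prod.If_cases Int_absorb1)
  have int: "integrable (M j) (?h j)" for j
    using h by (cases "j \<in> J") (simp_all add: prob_space_axioms)
  show "integrable (PiM I M) (\<lambda>x. \<Prod>j\<in>J. h j (x j))"
    using product_integrable_prod[OF I(1) int] by simp
  have "(\<integral>x. (\<Prod>j\<in>I. ?h j (x j)) \<partial>PiM I M) = (\<Prod>j\<in>I. \<integral>y. ?h j y \<partial>M j)"
    using product_integral_prod[OF I(1) int] .
  also have "\<dots> = (\<Prod>j\<in>I. if j \<in> J then \<integral>y. h j y \<partial>M j else 1)"
    by (intro prod.cong refl) (simp add: prob_space.prob_space[OF M])
  also have "\<dots> = (\<Prod>j\<in>J. \<integral>y. h j y \<partial>M j)"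
    using I by (simp add: prod.If_cases Int_absorb1)
  finally show "(\<integral>x. (\<Prod>j\<in>J. h j (x j)) \<partial>PiM I M) = (\<Prod>j\<in>J. \<integral>y. h j y \<partial>M j)" by simp
qed

lemma integral_PiM_sum_sq:
  fixes \<phi> :: "'a \<Rightarrow> real"
  assumes P: "prob_space P" and I: "finite I" "S \<subseteq> I"
    and \<phi>: "integrable P \<phi>" "integrable P (\<lambda>v. (\<phi> v)\<^sup>2)" "(\<integral>v. \<phi> v \<partial>P) = 0"
  shows "integrable (PiM I (\<lambda>_. P)) (\<lambda>x. (\<Sum>i\<in>S. \<phi> (x i))\<^sup>2)"
    and "(\<integral>x. (\<Sum>i\<in>S. \<phi> (x i))\<^sup>2 \<partial>PiM I (\<lambda>_. P)) = card S * (\<integral>v. (\<phi> v)\<^sup>2 \<partial>P)"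
proof -
  have pair: "integrable (PiM I (\<lambda>_. P)) (\<lambda>x. \<phi> (x i) * \<phi> (x j)) \<and>
      (\<integral>x. \<phi> (x i) * \<phi> (x j) \<partial>PiM I (\<lambda>_. P)) = (if i = j then \<integral>v. (\<phi> v)\<^sup>2 \<partial>P else 0)"
    if "i \<in> S" "j \<in> S" for i j
  proof (cases "i = j")
    case True
    then show ?thesis
      using integral_PiM_prod_components[OF P, of I "{i}" "\<lambda>_ v. (\<phi> v)\<^sup>2"] I that \<phi>
      by (auto simp: power2_eq_square)
  next
    case False
    then show ?thesis
      using integral_PiM_prod_components[OF P, of I "{i, j}" "\<lambda>_. \<phi>"] I that \<phi> by auto
  qed
  have sq: "(\<Sum>i\<in>S. \<phi> (x i))\<^sup>2 = (\<Sum>i\<in>S. \<Sum>j\<in>S. \<phi> (x i) * \<phi> (x j))" for x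
    by (simp add: power2_eq_square sum_product)
  show "integrable (PiM I (\<lambda>_. P)) (\<lambda>x. (\<Sum>i\<in>S. \<phi> (x i))\<^sup>2)"
    unfolding sq using pair by (intro Bochner_Integration.integrable_sum) auto
  have "(\<integral>x. (\<Sum>i\<in>S. \<phi> (x i))\<^sup>2 \<partial>PiM I (\<lambda>_. P)) =
      (\<Sum>i\<in>S. \<Sum>j\<in>S. if i = j then \<integral>v. (\<phi> v)\<^sup>2 \<partial>P else 0)"
    unfolding sq using pair
    by (simp add: Bochner_Integration.integral_sum Bochner_Integration.integrable_sum)
  also have "\<dots> = card S * (\<integral>v. (\<phi> v)\<^sup>2 \<partial>P)"
    using finite_subset[OF I(2,1)] by simp
  finally show "(\<integral>x. (\<Sum>i\<in>S. \<phi> (x i))\<^sup>2 \<partial>PiM I (\<lambda>_. P)) = card S * (\<integral>v. (\<phi> v)\<^sup>2 \<partial>P)" .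
qed

lemma nn_integral_pair_measure_add:
  assumes M: "prob_space M" and N: "prob_space N"
    and f: "f \<in> borel_measurable M" and g: "g \<in> borel_measurable N"
  shows "(\<integral>\<^sup>+p. f (fst p) + g (snd p) \<partial>(M \<Otimes>\<^sub>M N)) = (\<integral>\<^sup>+x. f x \<partial>M) + (\<integral>\<^sup>+y. g y \<partial>N)"
proof -
  interpret M: prob_space M by (rule M)
  interpret N: prob_space N by (rule N)
  have "(\<integral>\<^sup>+p. f (fst p) + g (snd p) \<partial>(M \<Otimes>\<^sub>M N)) = (\<integral>\<^sup>+x. \<integral>\<^sup>+y. f x + g y \<partial>N \<partial>M)"
    using f g by (subst N.nn_integral_fst[symmetric]) simp_all
  also have "\<dots> = (\<integral>\<^sup>+x. f x + (\<integral>\<^sup>+y. g y \<partial>N) \<partial>M)"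
    using g by (intro nn_integral_cong) (simp add: nn_integral_add N.emeasure_space_1)
  also have "\<dots> = (\<integral>\<^sup>+x. f x \<partial>M) + (\<integral>\<^sup>+y. g y \<partial>N)"
    using f by (simp add: nn_integral_add M.emeasure_space_1)
  finally show ?thesis .
qed

section \<open>The upper bound\<close>

definition clip :: "nat \<Rightarrow> real \<Rightarrow> (nat \<Rightarrow> real) \<Rightarrow> nat \<Rightarrow> real" where
  "clip d r v = (if sqnorm d v \<le> r\<^sup>2 then restrict v {..<d} else (\<lambda>c\<in>{..<d}. 0))"

definition clipped_mean :: "nat \<Rightarrow> real \<Rightarrow> nat set \<Rightarrow> (nat \<Rightarrow> nat \<Rightarrow> real) \<Rightarrow> nat \<Rightarrow> real" where
  "clipped_mean d r S z = (\<lambda>c\<in>{..<d}. (\<Sum>i\<in>S. clip d r (z i) c) / card S)"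

lemma measurable_clip [measurable]: "clip d r \<in> measurable (Rd d) (Rd d)"
proof -
  have [measurable]: "(\<lambda>v. restrict v {..<d}) \<in> measurable (Rd d) (Rd d)"
    unfolding Rd_def by (rule measurable_restrict) auto
  have [measurable]: "(\<lambda>v::nat\<Rightarrow>real. (\<lambda>c\<in>{..<d}. 0::real)) \<in> measurable (Rd d) (Rd d)"
    by (rule measurable_const) (simp add: space_Rd)
  show ?thesis unfolding clip_def by measurable
qed

lemma measurable_coordinate_clip: "c < d \<Longrightarrow> (\<lambda>v. clip d r v c) \<in> borel_measurable (Rd d)"
  using measurable_compose[OF measurable_clip measurable_coordinate_Rd] .

lemma clipped_mean_in_estimators:
  assumes "S \<subseteq> {..<n}"
  shows "clipped_mean d r S \<in> estimators d n"
proof -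
  have [measurable]: "(\<lambda>z. clip d r (z i) c) \<in> borel_measurable (Samp d n)" if "i \<in> S" "c < d" for i c
    using assms that by (intro measurable_compose[OF measurable_point_Samp measurable_coordinate_clip]) auto
  show ?thesis unfolding estimators_def clipped_mean_def Rd_def
    by (rule measurable_restrict) (auto intro!: borel_measurable_divide borel_measurable_sum)
qed

lemma measurable_sqnorm_diff [measurable]: "(\<lambda>v. sqnorm d (\<lambda>c. v c - \<mu> c)) \<in> borel_measurable (Rd d)"
  unfolding sqnorm_def[abs_def] Rd_def by measurable

lemma measurable_count_Bsp:
  assumes "S \<subseteq> {..<n}"
  shows "(\<lambda>b. \<Sum>i\<in>S. of_bool (b i) :: real) \<in> borel_measurable (Bsp n)"
proof -
  have "(\<lambda>b. of_bool (b i) :: real) \<in> borel_measurable (Bsp n)" if "i \<in> S" for i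
    using assms that unfolding Bsp_def
    by (intro measurable_compose[OF measurable_component_singleton, where g=of_bool]) auto
  then show ?thesis by (intro borel_measurable_sum)
qed

lemma sqnorm_clip: "sqnorm d (clip d r v) \<le> r\<^sup>2"
  by (auto simp: clip_def sqnorm_def)

lemma sqnorm_clip_diff: "sqnorm d (\<lambda>c. clip d r u c - clip d r v c) \<le> 4 * r\<^sup>2"
proof -
  have "sqnorm d (\<lambda>c. clip d r u c + - clip d r v c) \<le> 2 * sqnorm d (clip d r u) + 2 * sqnorm d (\<lambda>c. - clip d r v c)"
    by (rule sqnorm_add_le)
  also have "sqnorm d (\<lambda>c. - clip d r v c) = sqnorm d (clip d r v)" by (simp add: sqnorm_def)
  finally show ?thesis using sqnorm_clip[of d r u] sqnorm_clip[of d r v] by simp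
qed

lemma sqnorm_clipped_mean_zmap_le:
  assumes S: "S \<subseteq> {..<n}" "S \<noteq> {}"
  shows "sqnorm d (\<lambda>c. clipped_mean d r S (zmap n (x, b, xt)) c - \<mu> c) \<le>
     2 * sqnorm d (\<lambda>c. clipped_mean d r S x c - \<mu> c) + 8 * r\<^sup>2 * ((\<Sum>i\<in>S. of_bool (b i)) / card S)\<^sup>2"
proof -
  let ?k = "real (card S)"
  define Sb where "Sb = {i\<in>S. b i}"
  define w where "w i c = clip d r (xt i) c - clip d r (x i) c" for i c
  define D where "D c = (\<Sum>i\<in>Sb. w i c) / ?k" for c
  have finS: "finite S" using S(1) finite_subset by blast
  then have k0: "?k > 0" using S(2) by (simp add: card_gt_0_iff)
  have eq: "clipped_mean d r S (zmap n (x, b, xt)) c - \<mu> c = (clipped_mean d r S x c - \<mu> c) + D c"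
    if "c < d" for c
  proof -
    have "clip d r (zmap n (x, b, xt) i) c = clip d r (x i) c + (if b i then w i c else 0)" if "i \<in> S" for i
      using that S by (auto simp: zmap_def w_def)
    then have "(\<Sum>i\<in>S. clip d r (zmap n (x, b, xt) i) c) = (\<Sum>i\<in>S. clip d r (x i) c) + (\<Sum>i\<in>Sb. w i c)"
      using finS by (simp add: sum.distrib Sb_def sum.inter_filter)
    then show ?thesis using \<open>c < d\<close> by (simp add: clipped_mean_def D_def add_divide_distrib)
  qed
  have "sqnorm d (\<lambda>c. clipped_mean d r S (zmap n (x, b, xt)) c - \<mu> c) =
      sqnorm d (\<lambda>c. (clipped_mean d r S x c - \<mu> c) + D c)"
    unfolding sqnorm_def by (intro sum.cong) (auto simp: eq)
  also have "\<dots> \<le> 2 * sqnorm d (\<lambda>c. clipped_mean d r S x c - \<mu> c) + 2 * sqnorm d D"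
    by (rule sqnorm_add_le)
  also have "sqnorm d D \<le> 4 * r\<^sup>2 * ((\<Sum>i\<in>S. of_bool (b i)) / ?k)\<^sup>2"
  proof -
    have count: "(\<Sum>i\<in>S. of_bool (b i)) = real (card Sb)"
      using finS by (simp add: Sb_def Int_def sum.inter_filter[symmetric])
    have "sqnorm d D = (\<Sum>c<d. (\<Sum>i\<in>Sb. w i c)\<^sup>2) / ?k\<^sup>2"
      by (simp add: sqnorm_def D_def power_divide sum_divide_distrib[symmetric])
    also have "(\<Sum>c<d. (\<Sum>i\<in>Sb. w i c)\<^sup>2) \<le> (\<Sum>c<d. (\<Sum>i\<in>Sb. (w i c)\<^sup>2) * card Sb)"
      by (intro sum_mono sum_squared_le_sum_of_squares)
    also have "\<dots> = (\<Sum>i\<in>Sb. sqnorm d (w i)) * card Sb"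
      by (simp add: sqnorm_def sum_distrib_right[symmetric] sum.swap[of _ Sb])
    also have "\<dots> \<le> (\<Sum>i\<in>Sb. 4 * r\<^sup>2) * card Sb"
      by (intro mult_right_mono sum_mono) (simp_all add: w_def[abs_def] sqnorm_clip_diff)
    finally show ?thesis
      using k0 by (simp add: count divide_right_mono power2_eq_square field_simps)
  qed
  finally show ?thesis by simp
qed

lemma integral_PiM_bernoulli_prod:
  fixes n :: nat
  assumes J: "J \<subseteq> {..<n}" and lam: "\<And>l. l \<in> J \<Longrightarrow> 0 \<le> lam l \<and> lam l \<le> 1"
  shows "integrable (PiM {..<n} (\<lambda>i. measure_pmf (bernoulli_pmf (lam i)))) (\<lambda>b. \<Prod>l\<in>J. of_bool (b l) :: real)"
    and "(\<integral>b. (\<Prod>l\<in>J. of_bool (b l) :: real) \<partial>PiM {..<n} (\<lambda>i. measure_pmf (bernoulli_pmf (lam i)))) = (\<Prod>l\<in>J. lam l)"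
proof -
  have "integrable (measure_pmf (bernoulli_pmf (lam l))) (\<lambda>v. of_bool v :: real)" for l
    by (rule integrable_measure_pmf_finite) simp
  note prod = integral_PiM_prod_components[where M="\<lambda>l. measure_pmf (bernoulli_pmf (lam l))" and h="\<lambda>_ v. of_bool v",
      OF prob_space_measure_pmf finite_lessThan J this]
  show "integrable (PiM {..<n} (\<lambda>i. measure_pmf (bernoulli_pmf (lam i)))) (\<lambda>b. \<Prod>l\<in>J. of_bool (b l) :: real)"
    by (rule prod(1))
  show "(\<integral>b. (\<Prod>l\<in>J. of_bool (b l) :: real) \<partial>PiM {..<n} (\<lambda>i. measure_pmf (bernoulli_pmf (lam i)))) = (\<Prod>l\<in>J. lam l)"
    unfolding prod(2) using lam by (intro prod.cong) auto
qed

lemma nn_integral_count_sq_le: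
  fixes n :: nat
  assumes S: "S \<subseteq> {..<n}" and lam: "\<And>i. i \<in> S \<Longrightarrow> 0 \<le> lam i \<and> lam i \<le> t" and t: "t \<le> 1"
  shows "(\<integral>\<^sup>+b. (\<Sum>i\<in>S. of_bool (b i) :: real)\<^sup>2 \<partial>PiM {..<n} (\<lambda>i. measure_pmf (bernoulli_pmf (lam i))))
     \<le> ennreal ((real (card S) * t)\<^sup>2 + real (card S) * t)"
proof -
  let ?B = "PiM {..<n} (\<lambda>i. measure_pmf (bernoulli_pmf (lam i)))"
  let ?e = "\<lambda>v::bool. of_bool v :: real"
  have finS: "finite S" by (rule finite_subset[OF S finite_lessThan])
  have lam01: "0 \<le> lam i \<and> lam i \<le> 1" if "i \<in> S" for i using lam[OF that] t by linarith
  have pair: "integrable ?B (\<lambda>b. ?e (b i) * ?e (b j)) \<and>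
      (\<integral>b. ?e (b i) * ?e (b j) \<partial>?B) \<le> t\<^sup>2 + (if i = j then t else 0)" if ij: "i \<in> S" "j \<in> S" for i j
  proof (cases "i = j")
    case True
    have eq: "(\<lambda>b. ?e (b i) * ?e (b j)) = (\<lambda>b. \<Prod>l\<in>{i}. ?e (b l))" using True by (simp add: fun_eq_iff)
    have "lam i \<le> t\<^sup>2 + t" using lam[OF ij(1)] by (simp add: add_increasing)
    moreover have "{i} \<subseteq> {..<n}" "\<And>l. l \<in> {i} \<Longrightarrow> 0 \<le> lam l \<and> lam l \<le> 1"
      using S ij lam01 by auto
    ultimately show ?thesis unfolding eq using integral_PiM_bernoulli_prod[of "{i}" n lam] True by simp
  next
    case False
    have eq: "(\<lambda>b. ?e (b i) * ?e (b j)) = (\<lambda>b. \<Prod>l\<in>{i, j}. ?e (b l))" using False by simp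
    have "lam i * lam j \<le> t * t" using lam[OF ij(1)] lam[OF ij(2)] by (intro mult_mono) auto
    moreover have "{i, j} \<subseteq> {..<n}" "\<And>l. l \<in> {i, j} \<Longrightarrow> 0 \<le> lam l \<and> lam l \<le> 1"
      using S ij lam01 by auto
    ultimately show ?thesis
      unfolding eq using integral_PiM_bernoulli_prod[of "{i, j}" n lam] False by (simp add: power2_eq_square)
  qed
  have sq: "(\<Sum>i\<in>S. ?e (b i))\<^sup>2 = (\<Sum>i\<in>S. \<Sum>j\<in>S. ?e (b i) * ?e (b j))" for b
    by (simp add: power2_eq_square sum_product)
  have int_pair: "integrable ?B (\<lambda>b. ?e (b i) * ?e (b j))" if "i \<in> S" "j \<in> S" for i j
    using pair[OF that] by (rule conjunct1)
  have int: "integrable ?B (\<lambda>b. \<Sum>i\<in>S. \<Sum>j\<in>S. ?e (b i) * ?e (b j))"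
    by (intro Bochner_Integration.integrable_sum int_pair)
  have "(\<integral>b. (\<Sum>i\<in>S. \<Sum>j\<in>S. ?e (b i) * ?e (b j)) \<partial>?B) = (\<Sum>i\<in>S. \<Sum>j\<in>S. \<integral>b. ?e (b i) * ?e (b j) \<partial>?B)"
    using int_pair by (simp add: Bochner_Integration.integral_sum Bochner_Integration.integrable_sum)
  also have "\<dots> \<le> (\<Sum>i\<in>S. \<Sum>j\<in>S. t\<^sup>2 + (if i = j then t else 0))"
    using pair by (intro sum_mono) blast
  also have "\<dots> = (real (card S) * t)\<^sup>2 + real (card S) * t"
    using finS by (simp add: sum.distrib power2_eq_square algebra_simps)
  finally have bound: "(\<integral>b. (\<Sum>i\<in>S. \<Sum>j\<in>S. ?e (b i) * ?e (b j)) \<partial>?B) \<le> (real (card S) * t)\<^sup>2 + real (card S) * t" .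
  have "(\<integral>\<^sup>+b. (\<Sum>i\<in>S. ?e (b i))\<^sup>2 \<partial>?B) = ennreal (\<integral>b. (\<Sum>i\<in>S. \<Sum>j\<in>S. ?e (b i) * ?e (b j)) \<partial>?B)"
    unfolding sq using int by (intro nn_integral_eq_integral) (auto simp: sq[symmetric])
  also have "\<dots> \<le> ennreal ((real (card S) * t)\<^sup>2 + real (card S) * t)"
    using bound by (rule ennreal_leI)
  finally show ?thesis .
qed

lemma clip_moments:
  assumes P: "P \<in> Dball d r" and c: "c < d"
  shows "integrable P (\<lambda>v. clip d r v c)" "integrable P (\<lambda>v. (clip d r v c)\<^sup>2)"
    and "(\<integral>v. clip d r v c \<partial>P) = mean d P c"
proof -
  interpret prob_space P using P by (simp add: Dball_def)
  have sets: "sets P = sets (Rd d)" and ball: "AE v in P. sqnorm d v \<le> r\<^sup>2"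
    using P by (simp_all add: Dball_def)
  have m: "(\<lambda>v. clip d r v c) \<in> borel_measurable P" "(\<lambda>v. v c) \<in> borel_measurable P"
    using measurable_coordinate_clip[OF c] measurable_coordinate_Rd[OF c] sets
    by (simp_all cong: measurable_cong_sets)
  have bound: "(clip d r v c)\<^sup>2 \<le> r\<^sup>2" for v
    using coordinate_sq_le_sqnorm[OF c, of "clip d r v"] sqnorm_clip[of d r v] by linarith
  then have "\<bar>clip d r v c\<bar> \<le> \<bar>r\<bar>" for v by (simp add: abs_le_square_iff)
  then show "integrable P (\<lambda>v. clip d r v c)"
    using m by (intro integrable_const_bound[where B="\<bar>r\<bar>"]) auto
  show "integrable P (\<lambda>v. (clip d r v c)\<^sup>2)"
    using m bound by (intro integrable_const_bound[where B="r\<^sup>2"]) auto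
  have "AE v in P. clip d r v c = v c"
    using ball by eventually_elim (use c in \<open>simp add: clip_def\<close>)
  then have "(\<integral>v. clip d r v c \<partial>P) = (\<integral>v. v c \<partial>P)"
    using m by (intro integral_cong_AE) auto
  then show "(\<integral>v. clip d r v c \<partial>P) = mean d P c"
    using c by (simp add: mean_def)
qed

lemma sum_variance_clip_le:
  assumes P: "P \<in> Dball d r"
  shows "(\<Sum>c<d. \<integral>v. (clip d r v c - mean d P c)\<^sup>2 \<partial>P) \<le> r\<^sup>2"
proof -
  interpret prob_space P using P by (simp add: Dball_def)
  have "(\<integral>v. (clip d r v c - mean d P c)\<^sup>2 \<partial>P) = (\<integral>v. (clip d r v c)\<^sup>2 \<partial>P) - (mean d P c)\<^sup>2"
    if c: "c < d" for c
  proof -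
    have "(\<lambda>v. (clip d r v c - mean d P c)\<^sup>2) =
        (\<lambda>v. (clip d r v c)\<^sup>2 - 2 * mean d P c * clip d r v c + (mean d P c)\<^sup>2)"
      by (simp add: power2_diff algebra_simps)
    then show ?thesis
      using clip_moments[OF P c] by (simp add: prob_space power2_eq_square)
  qed
  then have "(\<Sum>c<d. \<integral>v. (clip d r v c - mean d P c)\<^sup>2 \<partial>P) \<le> (\<Sum>c<d. \<integral>v. (clip d r v c)\<^sup>2 \<partial>P)"
    by (intro sum_mono) simp
  also have "\<dots> = (\<integral>v. sqnorm d (clip d r v) \<partial>P)"
    unfolding sqnorm_def using clip_moments[OF P] by (simp add: Bochner_Integration.integral_sum)
  also have "\<dots> \<le> (\<integral>v. r\<^sup>2 \<partial>P)"
    unfolding sqnorm_def using clip_moments[OF P]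
    by (intro integral_mono Bochner_Integration.integrable_sum) (auto simp: sqnorm_clip[unfolded sqnorm_def])
  finally show ?thesis by (simp add: prob_space)
qed

lemma nn_integral_sqnorm_clipped_mean_le:
  assumes P: "P \<in> Dball d r" and S: "S \<subseteq> {..<n}" "S \<noteq> {}"
  shows "(\<integral>\<^sup>+x. sqnorm d (\<lambda>c. clipped_mean d r S x c - mean d P c) \<partial>PiM {..<n} (\<lambda>_. P)) \<le> ennreal (r\<^sup>2 / card S)"
proof -
  let ?X = "PiM {..<n} (\<lambda>_. P)"
  define k where "k = real (card S)"
  have finS: "finite S" using S finite_subset by blast
  then have k: "0 < k" using S by (simp add: k_def card_gt_0_iff)
  define \<phi> where "\<phi> c v = clip d r v c - mean d P c" for c v
  have Pp: "prob_space P" using P by (simp add: Dball_def)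
  have \<phi>: "integrable P (\<phi> c)" "integrable P (\<lambda>v. (\<phi> c v)\<^sup>2)" "(\<integral>v. \<phi> c v \<partial>P) = 0" if "c < d" for c
  proof -
    interpret prob_space P by (rule Pp)
    note clip = clip_moments[OF P that]
    show "integrable P (\<phi> c)" unfolding \<phi>_def using clip(1) by simp
    show "integrable P (\<lambda>v. (\<phi> c v)\<^sup>2)" unfolding \<phi>_def power2_diff using clip(1,2) by simp
    show "(\<integral>v. \<phi> c v \<partial>P) = 0" unfolding \<phi>_def using clip(1,3) by (simp add: prob_space)
  qed
  have dev: "sqnorm d (\<lambda>c. clipped_mean d r S x c - mean d P c) = (\<Sum>c<d. (\<Sum>i\<in>S. \<phi> c (x i))\<^sup>2) / k\<^sup>2" for x
  proof -
    have "clipped_mean d r S x c - mean d P c = (\<Sum>i\<in>S. \<phi> c (x i)) / k" if "c < d" for c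
      using that k by (simp add: clipped_mean_def \<phi>_def sum_subtractf k_def field_simps)
    then have "sqnorm d (\<lambda>c. clipped_mean d r S x c - mean d P c) = (\<Sum>c<d. ((\<Sum>i\<in>S. \<phi> c (x i)) / k)\<^sup>2)"
      unfolding sqnorm_def by (intro sum.cong) simp_all
    also have "\<dots> = (\<Sum>c<d. (\<Sum>i\<in>S. \<phi> c (x i))\<^sup>2) / k\<^sup>2"
      by (simp only: power_divide sum_divide_distrib[symmetric])
    finally show ?thesis .
  qed
  have int: "integrable ?X (\<lambda>x. (\<Sum>i\<in>S. \<phi> c (x i))\<^sup>2)" "(\<integral>x. (\<Sum>i\<in>S. \<phi> c (x i))\<^sup>2 \<partial>?X) = k * (\<integral>v. (\<phi> c v)\<^sup>2 \<partial>P)"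
    if "c < d" for c
    using integral_PiM_sum_sq[OF Pp _ S(1) \<phi>[OF that]] by (simp_all add: k_def)
  have "(\<integral>\<^sup>+x. sqnorm d (\<lambda>c. clipped_mean d r S x c - mean d P c) \<partial>?X) =
      ennreal (\<integral>x. (\<Sum>c<d. (\<Sum>i\<in>S. \<phi> c (x i))\<^sup>2) / k\<^sup>2 \<partial>?X)"
    unfolding dev using int(1)
    by (intro nn_integral_eq_integral Bochner_Integration.integrable_divide Bochner_Integration.integrable_sum)
      (auto intro!: AE_I2 divide_nonneg_nonneg sum_nonneg)
  also have "(\<integral>x. (\<Sum>c<d. (\<Sum>i\<in>S. \<phi> c (x i))\<^sup>2) / k\<^sup>2 \<partial>?X) = (\<Sum>c<d. \<integral>v. (\<phi> c v)\<^sup>2 \<partial>P) / k"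
    using int k by (simp add: Bochner_Integration.integral_sum sum_distrib_left[symmetric] power2_eq_square)
  also have "\<dots> \<le> r\<^sup>2 / k"
    using sum_variance_clip_le[OF P] k by (intro divide_right_mono) (simp_all add: \<phi>_def)
  finally show ?thesis by (simp add: k_def ennreal_leI)
qed

lemma risk_le_nn_integral_clean_law:
  assumes Q: "Q \<in> adversaries d n lam P" and H: "(\<lambda>p. H (fst p) (snd p)) \<in> borel_measurable (Samp d n \<Otimes>\<^sub>M Bsp n)"
    and le: "\<And>x b xt. sqnorm d (\<lambda>c. M (zmap n (x, b, xt)) c - mean d P c) \<le> H x b"
  shows "risk d n M P Q \<le> (\<integral>\<^sup>+p. H (fst p) (snd p) \<partial>clean_law d n lam P)"
proof -
  have sets: "sets Q = sets (Samp d n \<Otimes>\<^sub>M (Bsp n \<Otimes>\<^sub>M Samp d n))"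
    and marginal: "distr Q (Samp d n \<Otimes>\<^sub>M Bsp n) (\<lambda>(x, b, xt). (x, b)) = clean_law d n lam P"
    using Q by (simp_all add: adversaries_def)
  have proj: "(\<lambda>(x, b, xt). (x, b)) \<in> measurable Q (Samp d n \<Otimes>\<^sub>M Bsp n)"
    using sets by (simp cong: measurable_cong_sets)
  have "risk d n M P Q \<le> (\<integral>\<^sup>+\<omega>. H (fst \<omega>) (fst (snd \<omega>)) \<partial>Q)"
    unfolding risk_def using le by (intro nn_integral_mono ennreal_leI) (auto simp: split_paired_all)
  also have "\<dots> = (\<integral>\<^sup>+p. H (fst p) (snd p) \<partial>clean_law d n lam P)"
    unfolding marginal[symmetric] using H by (subst nn_integral_distr[OF proj]) (simp_all add: case_prod_beta)
  finally show ?thesis .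
qed

lemma risk_clipped_mean_le_moments:
  assumes S: "S \<subseteq> {..<n}" "S \<noteq> {}" and P: "P \<in> Dball d r" and Q: "Q \<in> adversaries d n lam P"
  shows "risk d n (clipped_mean d r S) P Q \<le>
    2 * (\<integral>\<^sup>+x. sqnorm d (\<lambda>c. clipped_mean d r S x c - mean d P c) \<partial>PiM {..<n} (\<lambda>_. P)) +
    ennreal (8 * r\<^sup>2 / (real (card S))\<^sup>2) *
      (\<integral>\<^sup>+b. (\<Sum>i\<in>S. of_bool (b i) :: real)\<^sup>2 \<partial>PiM {..<n} (\<lambda>i. measure_pmf (bernoulli_pmf (lam i))))"
proof -
  let ?X = "PiM {..<n} (\<lambda>_. P)" and ?B = "PiM {..<n} (\<lambda>i. measure_pmf (bernoulli_pmf (lam i)))"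
  define k where "k = real (card S)"
  define dev where "dev x = sqnorm d (\<lambda>c. clipped_mean d r S x c - mean d P c)" for x
  define cnt where "cnt b = (\<Sum>i\<in>S. of_bool (b i) :: real)" for b
  have dev_nonneg: "0 \<le> dev x" for x by (simp add: dev_def sqnorm_nonneg)
  have sets_X: "sets ?X = sets (Samp d n)"
    using P unfolding Samp_def Dball_def by (intro sets_PiM_cong) auto
  have sets_B: "sets ?B = sets (Bsp n)"
    unfolding Bsp_def by (intro sets_PiM_cong) auto
  have dev_meas [measurable]: "dev \<in> borel_measurable (Samp d n)"
    unfolding dev_def using clipped_mean_in_estimators[OF S(1)] unfolding estimators_def
    by (rule measurable_compose[OF _ measurable_sqnorm_diff])
  have cnt_meas [measurable]: "cnt \<in> borel_measurable (Bsp n)"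
    unfolding cnt_def using S(1) by (rule measurable_count_Bsp)
  define H where "H x b = 2 * dev x + 8 * r\<^sup>2 / k\<^sup>2 * (cnt b)\<^sup>2" for x b
  have "risk d n (clipped_mean d r S) P Q \<le> (\<integral>\<^sup>+p. H (fst p) (snd p) \<partial>clean_law d n lam P)"
  proof (rule risk_le_nn_integral_clean_law[OF Q])
    show "(\<lambda>p. H (fst p) (snd p)) \<in> borel_measurable (Samp d n \<Otimes>\<^sub>M Bsp n)"
      unfolding H_def by measurable
    show "sqnorm d (\<lambda>c. clipped_mean d r S (zmap n (x, b, xt)) c - mean d P c) \<le> H x b" for x b xt
      using sqnorm_clipped_mean_zmap_le[OF S, of d r x b xt "mean d P"]
      by (simp add: H_def dev_def cnt_def k_def power_divide)
  qed
  also have "\<dots> = (\<integral>\<^sup>+p. ennreal (2 * dev (fst p)) + ennreal (8 * r\<^sup>2 / k\<^sup>2 * (cnt (snd p))\<^sup>2) \<partial>(?X \<Otimes>\<^sub>M ?B))"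
    unfolding clean_law_def H_def by (intro nn_integral_cong ennreal_plus) (simp_all add: dev_nonneg)
  also have "\<dots> = (\<integral>\<^sup>+x. 2 * dev x \<partial>?X) + (\<integral>\<^sup>+b. 8 * r\<^sup>2 / k\<^sup>2 * (cnt b)\<^sup>2 \<partial>?B)"
    using P sets_X sets_B unfolding Dball_def
    by (intro nn_integral_pair_measure_add prob_space_PiM prob_space_measure_pmf)
      (simp_all cong: measurable_cong_sets)
  also have "(\<integral>\<^sup>+x. 2 * dev x \<partial>?X) = 2 * (\<integral>\<^sup>+x. dev x \<partial>?X)"
    using sets_X by (subst nn_integral_cmult[symmetric])
      (auto simp: ennreal_mult dev_nonneg cong: measurable_cong_sets)
  also have "(\<integral>\<^sup>+b. 8 * r\<^sup>2 / k\<^sup>2 * (cnt b)\<^sup>2 \<partial>?B) = (\<integral>\<^sup>+b. ennreal (8 * r\<^sup>2 / k\<^sup>2) * (cnt b)\<^sup>2 \<partial>?B)"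
    by (intro nn_integral_cong ennreal_mult) auto
  also have "\<dots> = ennreal (8 * r\<^sup>2 / k\<^sup>2) * (\<integral>\<^sup>+b. (cnt b)\<^sup>2 \<partial>?B)"
    by (rule nn_integral_cmult, subst measurable_cong_sets[OF sets_B refl]) measurable
  finally show ?thesis by (simp only: dev_def cnt_def k_def)
qed

lemma risk_clipped_mean_le:
  assumes t: "0 \<le> t" "t \<le> 1" and S: "S = {i\<in>{..<n}. lam i \<le> t}" "S \<noteq> {}"
    and lam: "\<And>i. i < n \<Longrightarrow> 0 \<le> lam i" and P: "P \<in> Dball d r" and Q: "Q \<in> adversaries d n lam P"
  shows "risk d n (clipped_mean d r S) P Q \<le> ennreal (10 * r\<^sup>2 * (1 / card S + t\<^sup>2))"
proof -
  define k where "k = real (card S)"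
  have Sn: "S \<subseteq> {..<n}" using S by auto
  have k: "0 < k" using S(2) finite_subset[OF Sn] by (simp add: k_def card_gt_0_iff)
  have dev: "(\<integral>\<^sup>+x. sqnorm d (\<lambda>c. clipped_mean d r S x c - mean d P c) \<partial>PiM {..<n} (\<lambda>_. P)) \<le> ennreal (r\<^sup>2 / k)"
    unfolding k_def by (rule nn_integral_sqnorm_clipped_mean_le[OF P Sn S(2)])
  have count: "(\<integral>\<^sup>+b. (\<Sum>i\<in>S. of_bool (b i) :: real)\<^sup>2 \<partial>PiM {..<n} (\<lambda>i. measure_pmf (bernoulli_pmf (lam i))))
      \<le> ennreal ((k * t)\<^sup>2 + k * t)"
    unfolding k_def by (rule nn_integral_count_sq_le[OF Sn]) (use S lam t in auto)
  have "risk d n (clipped_mean d r S) P Q \<le> 2 * ennreal (r\<^sup>2 / k) + ennreal (8 * r\<^sup>2 / k\<^sup>2) * ennreal ((k * t)\<^sup>2 + k * t)"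
    using risk_clipped_mean_le_moments[OF Sn S(2) P Q] unfolding k_def[symmetric]
    by (rule order_trans) (intro add_mono mult_left_mono dev count order_refl zero_le)
  also have "\<dots> = ennreal (2 * (r\<^sup>2 / k)) + ennreal (8 * r\<^sup>2 / k\<^sup>2 * ((k * t)\<^sup>2 + k * t))"
    using k t by (subst (1 2) ennreal_mult') simp_all
  also have "\<dots> = ennreal (2 * (r\<^sup>2 / k) + 8 * r\<^sup>2 / k\<^sup>2 * ((k * t)\<^sup>2 + k * t))"
    using k t by (subst ennreal_plus) simp_all
  also have "\<dots> \<le> ennreal (10 * r\<^sup>2 * (1 / k + t\<^sup>2))"
  proof (rule ennreal_leI)
    have "8 * r\<^sup>2 / k\<^sup>2 * ((k * t)\<^sup>2 + k * t) = 8 * (r\<^sup>2 * t\<^sup>2) + 8 * (r\<^sup>2 * t / k)"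
      using k by (simp add: field_simps power2_eq_square)
    moreover have "r\<^sup>2 * t / k \<le> r\<^sup>2 / k"
      using t k by (intro divide_right_mono mult_left_le) auto
    moreover have "10 * r\<^sup>2 * (1 / k + t\<^sup>2) = 10 * (r\<^sup>2 / k) + 10 * (r\<^sup>2 * t\<^sup>2)"
      by (simp add: field_simps)
    moreover have "0 \<le> r\<^sup>2 * t\<^sup>2" by simp
    ultimately show "2 * (r\<^sup>2 / k) + 8 * r\<^sup>2 / k\<^sup>2 * ((k * t)\<^sup>2 + k * t) \<le> 10 * r\<^sup>2 * (1 / k + t\<^sup>2)"
      by linarith
  qed
  finally show ?thesis by (simp add: k_def)
qed

lemma le_mult_INF_ennreal:
  fixes c :: ennreal
  assumes c: "c < top" and T: "T \<noteq> {}" and le: "\<And>t. t \<in> T \<Longrightarrow> x \<le> c * g t"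
  shows "x \<le> c * (INF t\<in>T. g t)"
proof -
  have "continuous_on UNIV (\<lambda>y::ennreal. c * y)"
    by (rule ennreal_continuous_on_cmult[OF c]) (rule continuous_on_id)
  then have "c * Inf (g ` T) = (INF s\<in>g ` T. c * s)"
    using T by (intro continuous_at_Inf_mono)
      (auto simp: mono_def mult_left_mono continuous_on_eq_continuous_within continuous_at_imp_continuous_at_within)
  then show ?thesis using le by (auto simp: image_image intro!: INF_greatest)
qed

lemma minimax_le:
  assumes r: "0 < r" and lam: "\<forall>i<n. 0 \<le> lam i \<and> lam i \<le> 1"
  shows "minimax d n lam (Dball d r) \<le> ennreal (10 * r\<^sup>2) * fval n lam 1"
  unfolding fval_def
proof (rule le_mult_INF_ennreal)
  fix t :: real assume t: "t \<in> {0..1}"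
  define S where "S = {i\<in>{..<n}. lam i \<le> t}"
  have fin: "finite S" by (simp add: S_def)
  show "minimax d n lam (Dball d r) \<le> ennreal (10 * r\<^sup>2) *
      (let N = card {i\<in>{..<n}. lam i \<le> t} in (if N = 0 then \<infinity> else ennreal (1 / real N)) + ennreal (t\<^sup>2))"
  proof (cases "S = {}")
    case True
    then show ?thesis unfolding Let_def S_def[symmetric] using r by (simp add: ennreal_mult_top)
  next
    case False
    have "minimax d n lam (Dball d r) \<le> (SUP P\<in>Dball d r. SUP Q\<in>adversaries d n lam P. risk d n (clipped_mean d r S) P Q)"
      unfolding minimax_def by (rule INF_lower) (rule clipped_mean_in_estimators, auto simp: S_def)
    also have "\<dots> \<le> ennreal (10 * r\<^sup>2 * (1 / card S + t\<^sup>2))"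
      using t lam False by (intro SUP_least risk_clipped_mean_le[OF _ _ S_def]) auto
    also have "\<dots> = ennreal (10 * r\<^sup>2) * (ennreal (1 / real (card S)) + ennreal (t\<^sup>2))"
      by (simp add: ennreal_mult ennreal_plus)
    finally show ?thesis unfolding Let_def S_def[symmetric] using False fin by simp
  qed
qed simp_all

theorem theorem1:
  shows "\<exists>c1 c2::real. 0 < c1 \<and> c1 \<le> c2 \<and>
    (\<forall>d::nat. \<forall>r::real. \<forall>n::nat. \<forall>lam::nat \<Rightarrow> real.
       d \<ge> 1 \<longrightarrow> r > 0 \<longrightarrow> n \<ge> 1 \<longrightarrow> (\<forall>i<n. 0 \<le> lam i \<and> lam i \<le> 1) \<longrightarrow>
         ennreal (c1 * r\<^sup>2) * fval n lam 1 \<le> minimax d n lam (Dball d r) \<and>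
         minimax d n lam (Dball d r) \<le> ennreal (c2 * r\<^sup>2) * fval n lam 1)"
proof (intro exI conjI allI impI)
  fix d n :: nat and r :: real and lam :: "nat \<Rightarrow> real"
  assume "d \<ge> 1" "r > 0" "n \<ge> 1" and lam: "\<forall>i<n. 0 \<le> lam i \<and> lam i \<le> 1"
  then show "ennreal (1/128 * r\<^sup>2) * fval n lam 1 \<le> minimax d n lam (Dball d r)"
    using minimax_ge[of d n lam r] by simp
  show "minimax d n lam (Dball d r) \<le> ennreal (10 * r\<^sup>2) * fval n lam 1"
    using minimax_le \<open>r > 0\<close> lam .
qed simp_all

end
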